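(* Assume $f$ satisfies (A1), (A2), (A3), (A4) with $k=1$, let $\bar\lambda_1=\lambda+2\tau_1\mathsf D$, and assume $$200\min\{\mu,(\bar\lambda_1\rho_1)^{1/2}\}\,\mathsf D\le\varepsilon.$$ Let $x_0\in X$, $\hat y\in Y$. Run Algorithm 2 with $\gamma_x=\frac{1}{3\bar\lambda_1+\mu^2/\rho_1}$, $\mathsf{Coupled}=\mathbb 1\{\mu\ge(\bar\lambda_1\rho_1)^{1/2}\}$, $\gamma_y=1/\rho_1$ if $\mathsf{Coupled}=1$, and $$T\ge\Big(3+\frac{\mu^2}{\bar\lambda_1\rho_1}\Big)\Big(\frac{700\bar\lambda_1\Delta}{\varepsilon^2}+1\Big)$$ iterations, where $\Delta=\varphi(x_0)-\min_{x\in X}\varphi(x)$. Then the output $x^*\in X$ satisfies $\|\nabla\varphi_{2\bar\lambda_1}(x^* )\|\le\varepsilon$.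
   Context: Let $E_x,E_y$ be finite-dimensional Euclidean spaces with Euclidean norms $\|\cdot\|$ (operator norms for tensors). Let $X\subseteq E_x$, $Y\subseteq E_y$ be convex with nonempty interior, $Y$ compact, $\mathsf D\ge\mathrm{diam}(Y)$. Let $f:X\times Y\to\mathbb R$ and $\varphi(x)=\max_{y\in Y}f(x,y)$. (A1) $\nabla_x f$ exists and $\|\nabla_x f(x',y')-\nabla_x f(x,y)\|\le\lambda\|x'-x\|+\mu\|y'-y\|$ for all $x,x'\in X,y,y'\in Y$ ($\lambda>0,\mu\ge0$). (A2) with $k=1$: $\nabla_y f$ exists and $\|\nabla_y f(x',y')-\nabla_y f(x,y)\|\le\rho_1\|y'-y\|+\sigma_1\|x'-x\|$. (A3) with $k=1$: $\nabla^2_{xy}f$ exists and $\|\nabla^2_{xy}f(x',y)-\nabla^2_{xy}f(x,y)\|\le\tau_1\|x'-x\|$. (A4) with $k=1$: with $Y'_x$ the set of $y\in Y$ at which the third-order partial derivative tensor $\nabla^3_{xxy}f(x,y)$ does not exist, the set $\{(x,y):x\in X,y\in Y'_x\}$ is Lebesgue measurable. For a weakly convex $\phi:X\to\mathbb R$ (i.e. $\phi+\frac{c}{2}\|\cdot\|^2$ convex for some $c<\bar\lambda$), its Moreau envelope is $\phi_{\bar\lambda}(x)=\min_{u\in X}\{\phi(u)+\frac{\bar\lambda}2\|u-x\|^2\}$. $\Pi_X,\Pi_Y$ denote Euclidean projections. Algorithm 2 (input $x_0\in X$, $\hat y\in Y$, $\gamma_x>0$, $T$, $\mathsf{Coupled}\in\{0,1\}$,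 $\gamma_y>0$): set $x^*=x_0$, $\varepsilon^*=+\infty$. For $t=0,\dots,T-1$: if $\mathsf{Coupled}=1$, set $y_t=\Pi_Y[\hat y+\gamma_y\nabla_y f(x_t,\hat y)]$ and $\tilde x_{t+1}=x_t-\gamma_x[\nabla_x f(x_t,\hat y)+\nabla^2_{xy}f(x_t,\hat y)(y_t-\hat y)]$; otherwise choose $y_t\in\operatorname{Argmax}_{y\in Y}\langle\nabla_y f(x_t,\hat y),y\rangle$ and set $\tilde x_{t+1}=x_t-\gamma_x\nabla_x f(x_t,y_t)$. Then $x_{t+1}=\Pi_X[\tilde x_{t+1}]$, $\varepsilon_t^2=\frac1{\gamma_x^2}\|\tilde x_{t+1}-x_t\|^2-\frac1{\gamma_x^2}\|\tilde x_{t+1}-x_{t+1}\|^2$, and if $\varepsilon_t<\varepsilon^*$ set $x^*=x_t$, $\varepsilon^*=\varepsilon_t$. Output $x^*$. *)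

theory Defs
  imports "HOL-Analysis.Analysis"
begin

text \<open>phi(x) = max over y in Y of f(x,y) (the max exists under the standing assumptions).\<close>
definition max_fun :: "('a \<Rightarrow> 'b \<Rightarrow> real) \<Rightarrow> 'b set \<Rightarrow> 'a \<Rightarrow> real" where
  "max_fun f Y x = (SUP y\<in>Y. f x y)"

definition moreau_env :: "('a::real_normed_vector \<Rightarrow> real) \<Rightarrow> 'a set \<Rightarrow> real \<Rightarrow> 'a \<Rightarrow> real" where
  "moreau_env phi X l x = (INF u\<in>X. phi u + l / 2 * (norm (u - x))\<^sup>2)"

definition is_proj :: "'a::real_normed_vector set \<Rightarrow> 'a \<Rightarrow> 'a \<Rightarrow> bool" where
  "is_proj S z p \<longleftrightarrow> p \<in> S \<and> (\<forall>q\<in>S. norm (z - p) \<le> norm (z - q))"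

definition alg2_eps :: "real \<Rightarrow> (nat \<Rightarrow> 'a::real_normed_vector) \<Rightarrow> (nat \<Rightarrow> 'a) \<Rightarrow> nat \<Rightarrow> real" where
  "alg2_eps gx xs xt t =
     sqrt ((norm (xt (Suc t) - xs t))\<^sup>2 / gx\<^sup>2 - (norm (xt (Suc t) - xs (Suc t)))\<^sup>2 / gx\<^sup>2)"

text \<open>Output of Algorithm 2: the first iterate x_t (t < T) at which eps_t is minimal
  (strict-improvement rule with eps* initialised to +infinity); x_0 if T = 0.\<close>
definition alg2_output :: "real \<Rightarrow> nat \<Rightarrow> (nat \<Rightarrow> 'a::real_normed_vector) \<Rightarrow> (nat \<Rightarrow> 'a) \<Rightarrow> 'a" where
  "alg2_output gx T xs xt =
     (if T = 0 then xs 0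
      else xs (LEAST t. t < T \<and> (\<forall>s<T. alg2_eps gx xs xt t \<le> alg2_eps gx xs xt s)))"

text \<open>A run of Algorithm 2: xs t = x_t, ys t = y_t, xt (t+1) = tilde x_(t+1).
  gx_f, gy_f are the partial gradients of f, Hxy the mixed second derivative.\<close>
definition alg2_run ::
  "'a::euclidean_space set \<Rightarrow> 'b::euclidean_space set \<Rightarrow>
   ('a \<Rightarrow> 'b \<Rightarrow> 'a) \<Rightarrow> ('a \<Rightarrow> 'b \<Rightarrow> 'b) \<Rightarrow> ('a \<Rightarrow> 'b \<Rightarrow> ('b \<Rightarrow>\<^sub>L 'a)) \<Rightarrow>
   'a \<Rightarrow> 'b \<Rightarrow> real \<Rightarrow> nat \<Rightarrow> bool \<Rightarrow> real \<Rightarrow>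
   (nat \<Rightarrow> 'a) \<Rightarrow> (nat \<Rightarrow> 'b) \<Rightarrow> (nat \<Rightarrow> 'a) \<Rightarrow> bool" where
  "alg2_run X Y gx_f gy_f Hxy x0 yhat gam_x T coupled gam_y xs ys xt \<longleftrightarrow>
     xs 0 = x0 \<and>
     (\<forall>t<T.
        (if coupled then
           is_proj Y (yhat + gam_y *\<^sub>R gy_f (xs t) yhat) (ys t) \<and>
           xt (Suc t) = xs t - gam_x *\<^sub>R (gx_f (xs t) yhat + blinfun_apply (Hxy (xs t) yhat) (ys t - yhat))
         else
           ys t \<in> Y \<and> (\<forall>y\<in>Y. inner (gy_f (xs t) yhat) y \<le> inner (gy_f (xs t) yhat) (ys t)) \<and>
           xt (Suc t) = xs t - gam_x *\<^sub>R gx_f (xs t) (ys t)) \<and>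
        is_proj X (xt (Suc t)) (xs (Suc t)))"

end

(* The max function phi = max_y f(., y) is lam-weakly convex, so its Moreau envelope with
   parameter 2 Lbar (Lbar = lam + 2 tau D) is differentiable, with gradient 2 Lbar (x - P) at the
   proximal point P of x.  Each step of Algorithm 2 is a projected gradient step x_t -> x_(t+1) on a
   surrogate Psi with Psi <= phi <= Psi + b on X and two inexact quadratic models at x_t,
     Psi z <= Psi x_t + <G, z - x_t> + M/2 |z - x_t|^2 + a |z - x_t|    (M gam <= 1),
     Psi z >= Psi x_t + <G, z - x_t> - Lbar/2 |z - x_t|^2 - a |z - x_t|.
   Without coupling Psi = phi, a = mu D and b = 0.  With coupling Psi is the maximum over Y of the
   linearization of f in y at yhat minus rho/2 |y - yhat|^2, a concave quadratic in y that the
   projected ascent step y_t maximizes exactly; then a = 0 and b = rho D^2.  The upper model makes Psi decrease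
   by gam eps_t^2/2 - a gam eps_t per step, so the iteration budget forces the smallest eps_t below
   eps/6.  The lower model, tested at near-minimizers of the Moreau objective, bounds |P - x_t| and
   hence the envelope gradient by eps_t, a and b, which the smallness assumption on
   min(mu, sqrt(Lbar rho)) D keeps below eps. *)

theory Submission
  imports Defs
begin

section \<open>Projections, Lipschitz gradients and difference quotients\<close>

lemma is_proj_obtuse_angle:
  fixes S :: "'a::real_inner set"
  assumes "convex S" "is_proj S z p" "q \<in> S"
  shows "inner (z - p) (q - p) \<le> 0"
proof (rule ccontr)
  assume "\<not> ?thesis"
  then obtain u where u: "0 < u" "u \<le> 1" "dist (p + u *\<^sub>R (q - p)) z < dist p z"
    using closer_point_lemma[of z p q] by auto
  have "p \<in> S" "\<forall>q\<in>S. norm (z - p) \<le> norm (z - q)"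
    using assms(2) unfolding is_proj_def by auto
  moreover have "(1 - u) *\<^sub>R p + u *\<^sub>R q \<in> S"
    using convexD_alt[OF assms(1) \<open>p \<in> S\<close> assms(3)] u by auto
  ultimately show False
    using u(3) by (force simp: dist_norm norm_minus_commute algebra_simps)
qed

lemma lipschitz_gradient_upper_bound:
  fixes F :: "'a::real_inner \<Rightarrow> real"
  assumes S: "convex S"
    and der: "\<And>x. x \<in> S \<Longrightarrow> (F has_derivative (\<lambda>h. inner (G x) h)) (at x within S)"
    and lip: "\<And>x x'. x \<in> S \<Longrightarrow> x' \<in> S \<Longrightarrow> norm (G x' - G x) \<le> K * norm (x' - x)"
    and u: "u \<in> S" and v: "v \<in> S"
  shows "F v \<le> F u + inner (G u) (v - u) + K / 2 * (norm (v - u))\<^sup>2"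
proof -
  define l where "l s = u + s *\<^sub>R (v - u)" for s :: real
  define c where "c = (norm (v - u))\<^sup>2"
  define h where "h s = F (l s) - s * inner (G u) (v - u) - K / 2 * s\<^sup>2 * c" for s
  have lS: "l s \<in> S" if "s \<in> {0..1}" for s
    using convexD_alt[OF S u v, of s] that by (auto simp: l_def algebra_simps)
  have dl: "(l has_derivative (\<lambda>t. t *\<^sub>R (v - u))) (at s within {0..1})" for s
    unfolding l_def by (auto intro!: derivative_eq_intros)
  have dF: "((\<lambda>s. F (l s)) has_derivative (\<lambda>t. inner (G (l s)) (t *\<^sub>R (v - u)))) (at s within {0..1})"
    if "s \<in> {0..1}" for s
    by (rule has_derivative_in_compose2[of S F "\<lambda>x h. inner (G x) h", OF der _ that dl])
       (use lS in auto)
  have dh: "(h has_derivative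
      (\<lambda>t. inner (G (l s)) (t *\<^sub>R (v - u)) - t * inner (G u) (v - u) - t * (K * s * c)))
      (at s within {0..1})" if "s \<in> {0..1}" for s
    unfolding h_def
    by (rule derivative_eq_intros dF[OF that] refl | simp add: power2_eq_square algebra_simps)+
  obtain s where s: "s \<in> {0..1}"
    and mvt: "h 1 - h 0 = inner (G (l s) - G u) (v - u) - K * s * c"
    using mvt_very_simple[of 0 1 h, OF _ dh] by (force simp: inner_diff_left)
  have "inner (G (l s) - G u) (v - u) \<le> norm (G (l s) - G u) * norm (v - u)"
    by (rule norm_cauchy_schwarz)
  also have "\<dots> \<le> K * norm (l s - u) * norm (v - u)"
    by (rule mult_right_mono[OF lip[OF u lS[OF s]]]) simp
  also have "\<dots> = K * s * c"
    using s by (simp add: l_def c_def power2_eq_square)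
  finally have "h 1 \<le> h 0" using mvt by simp
  then show ?thesis by (simp add: h_def l_def c_def)
qed

lemma lipschitz_gradient_quadratic_bound:
  fixes F :: "'a::real_inner \<Rightarrow> real"
  assumes S: "convex S"
    and der: "\<And>x. x \<in> S \<Longrightarrow> (F has_derivative (\<lambda>h. inner (G x) h)) (at x within S)"
    and lip: "\<And>x x'. x \<in> S \<Longrightarrow> x' \<in> S \<Longrightarrow> norm (G x' - G x) \<le> K * norm (x' - x)"
    and u: "u \<in> S" and v: "v \<in> S"
  shows "\<bar>F v - F u - inner (G u) (v - u)\<bar> \<le> K / 2 * (norm (v - u))\<^sup>2"
proof -
  have "- F v \<le> - F u + inner (- G u) (v - u) + K / 2 * (norm (v - u))\<^sup>2"
  proof (rule lipschitz_gradient_upper_bound[OF S _ _ u v])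
    show "((\<lambda>x. - F x) has_derivative (\<lambda>h. inner (- G x) h)) (at x within S)" if "x \<in> S" for x
      using has_derivative_minus[OF der[OF that]] by simp
    show "norm (- G x' - - G x) \<le> K * norm (x' - x)" if "x \<in> S" "x' \<in> S" for x x'
      using lip[OF that] by (simp add: norm_minus_commute)
  qed
  moreover have "F v \<le> F u + inner (G u) (v - u) + K / 2 * (norm (v - u))\<^sup>2"
    by (rule lipschitz_gradient_upper_bound[OF S der lip u v])
  ultimately show ?thesis
    by (simp only: inner_minus_left abs_le_iff) linarith
qed

lemma has_derivative_if_quadratic_remainder:
  fixes F :: "'a::real_inner \<Rightarrow> real"
  assumes "\<And>h. \<bar>F (x + h) - F x - inner g h\<bar> \<le> C * (norm h)\<^sup>2"
  shows "(F has_derivative (\<lambda>h. inner g h)) (at x)"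
  unfolding has_derivative_iff_norm
proof
  show "bounded_linear (inner g)" by (rule bounded_linear_inner_right)
  have "((\<lambda>y. C * norm (y - x)) \<longlongrightarrow> C * norm (x - x)) (at x)"
    by (intro tendsto_intros)
  then have "((\<lambda>y. C * norm (y - x)) \<longlongrightarrow> 0) (at x)" by simp
  moreover have "\<forall>\<^sub>F y in at x. norm (norm (F y - F x - inner g (y - x)) / norm (y - x)) \<le> C * norm (y - x)"
  proof (rule always_eventually, intro allI)
    fix y
    have "\<bar>F y - F x - inner g (y - x)\<bar> \<le> C * (norm (y - x))\<^sup>2"
      using assms[of "y - x"] by simp
    then show "norm (norm (F y - F x - inner g (y - x)) / norm (y - x)) \<le> C * norm (y - x)"
      by (cases "y = x") (auto simp: divide_le_eq power2_eq_square mult.assoc)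
  qed
  ultimately show "((\<lambda>y. norm (F y - F x - inner g (y - x)) / norm (y - x)) \<longlongrightarrow> 0) (at x)"
    by (rule Lim_null_comparison[rotated])
qed

lemma difference_quotient_tendsto:
  fixes F :: "'b::real_normed_vector \<Rightarrow> 'c::real_normed_vector"
  assumes der: "(F has_derivative F') (at y within Y)"
    and Y: "convex Y" "y \<in> Y" "y + v \<in> Y"
  shows "(\<lambda>n. real (Suc n) *\<^sub>R (F (y + inverse (real (Suc n)) *\<^sub>R v) - F y)) \<longlonglongrightarrow> F' v"
proof (cases "v = 0")
  case True
  then show ?thesis
    using linear_0[OF has_derivative_linear[OF der]] by simp
next
  case False
  define z where "z n = y + inverse (real (Suc n)) *\<^sub>R v" for n
  have lin: "linear F'" using der by (rule has_derivative_linear)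
  have zY: "z n \<in> Y" for n
    using convexD_alt[OF Y, of "inverse (real (Suc n))"] by (simp add: z_def algebra_simps inverse_le_1_iff)
  have "(\<lambda>n. y + inverse (real (Suc n)) *\<^sub>R v) \<longlonglongrightarrow> y + 0 *\<^sub>R v"
    by (intro tendsto_intros LIMSEQ_inverse_real_of_nat)
  then have "z \<longlonglongrightarrow> y" by (simp add: z_def[abs_def])
  then have "filterlim z (at y within Y) sequentially"
    using zY False by (auto simp: z_def filterlim_at intro!: always_eventually)
  moreover have "((\<lambda>u. (1 / norm (u - y)) *\<^sub>R (F u - (F y + F' (u - y)))) \<longlongrightarrow> 0) (at y within Y)"
    using der unfolding has_derivative_within by simp
  ultimately have "(\<lambda>n. (1 / norm (z n - y)) *\<^sub>R (F (z n) - (F y + F' (z n - y)))) \<longlonglongrightarrow> 0"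
    by (rule filterlim_compose[rotated])
  from tendsto_scaleR[OF tendsto_const this, of "norm v"]
  have "(\<lambda>n. norm v *\<^sub>R ((1 / norm (z n - y)) *\<^sub>R (F (z n) - (F y + F' (z n - y))))) \<longlonglongrightarrow> 0"
    by (simp only: scaleR_zero_right)
  moreover have "norm v *\<^sub>R ((1 / norm (z n - y)) *\<^sub>R (F (z n) - (F y + F' (z n - y))))
      = real (Suc n) *\<^sub>R (F (z n) - F y) - F' v" for n
    using False by (simp add: z_def linear_scale[OF lin] field_simps del: of_nat_Suc)
  ultimately show ?thesis
    by (simp add: z_def LIM_zero_iff)
qed

lemma has_derivative_lipschitz_bound:
  fixes F :: "'b::real_normed_vector \<Rightarrow> 'c::real_normed_vector"
  assumes der: "(F has_derivative F') (at y within Y)" and Y: "convex Y" "y \<in> Y"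
    and lip: "\<And>u v. u \<in> Y \<Longrightarrow> v \<in> Y \<Longrightarrow> norm (F u - F v) \<le> K * norm (u - v)"
    and u: "u \<in> Y" and v: "v \<in> Y"
  shows "norm (F' (u - v)) \<le> K * norm (u - v)"
proof -
  define q where "q w n = real (Suc n) *\<^sub>R (F (y + inverse (real (Suc n)) *\<^sub>R (w - y)) - F y)"
    for w n
  have lim: "q w \<longlonglongrightarrow> F' (w - y)" if "w \<in> Y" for w
    unfolding q_def using difference_quotient_tendsto[OF der Y, of "w - y"] that by simp
  have inY: "y + inverse (real (Suc n)) *\<^sub>R (w - y) \<in> Y" if "w \<in> Y" for w n
    using convexD_alt[OF Y(1,2) that, of "inverse (real (Suc n))"] by (simp add: algebra_simps inverse_le_1_iff)
  have "norm (q u n - q v n) \<le> K * norm (u - v)" for n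
  proof -
    have "q u n - q v n = real (Suc n) *\<^sub>R
        (F (y + inverse (real (Suc n)) *\<^sub>R (u - y)) - F (y + inverse (real (Suc n)) *\<^sub>R (v - y)))"
      unfolding q_def by (simp add: algebra_simps del: of_nat_Suc)
    then have "norm (q u n - q v n) = real (Suc n) *
        norm (F (y + inverse (real (Suc n)) *\<^sub>R (u - y)) - F (y + inverse (real (Suc n)) *\<^sub>R (v - y)))"
      by (simp del: of_nat_Suc)
    also have "\<dots> \<le> real (Suc n) * (K * norm (inverse (real (Suc n)) *\<^sub>R (u - v)))"
      using lip[OF inY[OF u, of n] inY[OF v, of n]]
      by (intro mult_left_mono) (simp_all add: algebra_simps del: of_nat_Suc)
    also have "\<dots> = K * norm (u - v)" by (simp del: of_nat_Suc)
    finally show ?thesis .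
  qed
  moreover have "(\<lambda>n. norm (q u n - q v n)) \<longlonglongrightarrow> norm (F' (u - y) - F' (v - y))"
    by (intro tendsto_intros lim u v)
  moreover have "F' (u - y) - F' (v - y) = F' (u - v)"
    using linear_diff[OF has_derivative_linear[OF der], of "u - y" "v - y"] by simp
  ultimately show ?thesis
    by (metis (mono_tags) LIMSEQ_le_const2)
qed

section \<open>Weak convexity and the Moreau envelope\<close>

text \<open>In an inner product space this says that \<open>phi + c/2 \<parallel>\<cdot>\<parallel>\<^sup>2\<close> is midpoint convex on \<open>S\<close>:
  weak convexity with constant \<open>c\<close>.\<close>
definition midpoint_weakly_convex_on :: "real \<Rightarrow> 'a::real_normed_vector set \<Rightarrow> ('a \<Rightarrow> real) \<Rightarrow> bool"
  where "midpoint_weakly_convex_on c S phi \<longleftrightarrow>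
    (\<forall>u\<in>S. \<forall>v\<in>S. phi (midpoint u v) \<le> (phi u + phi v) / 2 + c / 8 * (norm (u - v))\<^sup>2)"

text \<open>\<open>P\<close> is the proximal point of \<open>z\<close>; since \<open>X\<close> need not be closed it is only a limit
  of minimizing sequences of the Moreau objective.\<close>
definition is_prox_limit :: "('a::real_normed_vector \<Rightarrow> real) \<Rightarrow> 'a set \<Rightarrow> real \<Rightarrow> 'a \<Rightarrow> 'a \<Rightarrow> bool"
  where "is_prox_limit phi X l z P \<longleftrightarrow>
    (\<exists>w. range w \<subseteq> X \<and> w \<longlonglongrightarrow> P \<and>
         (\<lambda>n. phi (w n) + l / 2 * (norm (w n - z))\<^sup>2) \<longlonglongrightarrow> moreau_env phi X l z)"

lemma bdd_below_moreau_objective: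
  assumes "bdd_below (phi ` X)" "0 \<le> l"
  shows "bdd_below ((\<lambda>u. phi u + l / 2 * (norm (u - z))\<^sup>2) ` X)"
proof -
  obtain m where m: "\<And>u. u \<in> X \<Longrightarrow> m \<le> phi u"
    using assms(1) unfolding bdd_below_def by auto
  show ?thesis
  proof (rule bdd_belowI2)
    fix u assume "u \<in> X"
    then show "m \<le> phi u + l / 2 * (norm (u - z))\<^sup>2"
      using m[of u] assms(2) by (intro add_increasing2) simp_all
  qed
qed

lemma moreau_env_le:
  assumes "bdd_below (phi ` X)" "0 \<le> l" "u \<in> X"
  shows "moreau_env phi X l z \<le> phi u + l / 2 * (norm (u - z))\<^sup>2"
  unfolding moreau_env_def by (rule cINF_lower[OF bdd_below_moreau_objective[OF assms(1,2)] assms(3)])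

lemma norm_midpoint_diff_squared:
  fixes u v z :: "'a::real_inner"
  shows "(norm (midpoint u v - z))\<^sup>2 = ((norm (u - z))\<^sup>2 + (norm (v - z))\<^sup>2) / 2 - (norm (u - v))\<^sup>2 / 4"
  by (simp add: midpoint_def power2_norm_eq_inner algebra_simps inner_diff_left inner_diff_right
      inner_add_left inner_add_right inner_commute field_simps)

lemma moreau_objective_growth:
  fixes phi :: "'a::real_inner \<Rightarrow> real"
  assumes X: "convex X" and bdd: "bdd_below (phi ` X)"
    and wc: "midpoint_weakly_convex_on c X phi" and l: "c < l" "0 < l"
    and u: "u \<in> X" and v: "v \<in> X"
  shows "2 * moreau_env phi X l z - (phi u + l / 2 * (norm (u - z))\<^sup>2) + (l - c) / 4 * (norm (u - v))\<^sup>2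
    \<le> phi v + l / 2 * (norm (v - z))\<^sup>2"
proof -
  define V where "V w = phi w + l / 2 * (norm (w - z))\<^sup>2" for w
  have "midpoint u v \<in> X"
    using convexD[OF X u v, of "1/2" "1/2"] by (simp add: midpoint_def scaleR_add_right)
  then have "moreau_env phi X l z \<le> V (midpoint u v)"
    unfolding V_def using moreau_env_le[OF bdd] l by simp
  also have "\<dots> \<le> (V u + V v) / 2 - (l - c) / 8 * (norm (u - v))\<^sup>2"
  proof -
    have "phi (midpoint u v) \<le> (phi u + phi v) / 2 + c / 8 * (norm (u - v))\<^sup>2"
      using wc u v unfolding midpoint_weakly_convex_on_def by blast
    then show ?thesis
      unfolding V_def norm_midpoint_diff_squared by (simp add: field_simps)
  qed
  finally show ?thesis
    unfolding V_def by (simp add: field_simps)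
qed

lemma Cauchy_if_pairwise_bound:
  fixes w :: "nat \<Rightarrow> 'a::metric_space"
  assumes d: "d \<longlonglongrightarrow> 0" and k: "0 < k"
    and close: "\<And>m n. k * (dist (w m) (w n))\<^sup>2 \<le> d m + d n"
  shows "Cauchy w"
proof (rule metric_CauchyI)
  fix r :: real assume r: "0 < r"
  then have "0 < k * r\<^sup>2 / 2" using k by simp
  then obtain N where N: "\<And>n. N \<le> n \<Longrightarrow> d n < k * r\<^sup>2 / 2"
    using order_tendstoD(2)[OF d] unfolding eventually_sequentially by blast
  have "dist (w m) (w n) < r" if "N \<le> m" "N \<le> n" for m n
  proof -
    have "k * (dist (w m) (w n))\<^sup>2 < k * r\<^sup>2"
      using close[of m n] N[OF that(1)] N[OF that(2)] by linarith
    then have "(dist (w m) (w n))\<^sup>2 < r\<^sup>2"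
      by (simp only: mult_less_cancel_left_pos[OF k])
    then show ?thesis
      by (rule power2_less_imp_less) (use r in simp)
  qed
  then show "\<exists>M. \<forall>m\<ge>M. \<forall>n\<ge>M. dist (w m) (w n) < r" by blast
qed

lemma moreau_minimizing_sequence:
  assumes X: "X \<noteq> {}" and bdd: "bdd_below (phi ` X)" and l: "0 \<le> l"
  obtains w where "\<And>n. w n \<in> X"
    "(\<lambda>n. phi (w n) + l / 2 * (norm (w n - z))\<^sup>2) \<longlonglongrightarrow> moreau_env phi X l z"
proof -
  define V where "V w = phi w + l / 2 * (norm (w - z))\<^sup>2" for w
  define e where "e = moreau_env phi X l z"
  have bddV: "bdd_below (V ` X)"
    using bdd_below_moreau_objective[OF bdd l] unfolding V_def[abs_def] .
  have "\<exists>u. u \<in> X \<and> V u < e + inverse (real (Suc n))" for n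
  proof -
    have "(INF u\<in>X. V u) < e + inverse (real (Suc n))"
      by (simp add: e_def moreau_env_def V_def)
    then show ?thesis
      unfolding cINF_less_iff[OF X bddV] by blast
  qed
  then have "\<exists>w. \<forall>n. w n \<in> X \<and> V (w n) < e + inverse (real (Suc n))"
    by (intro choice allI)
  then obtain w where w: "\<And>n. w n \<in> X" "\<And>n. V (w n) < e + inverse (real (Suc n))"
    by blast
  have "(\<lambda>n. V (w n)) \<longlonglongrightarrow> e"
  proof (rule tendsto_sandwich[OF _ _ tendsto_const])
    show "(\<lambda>n. e + inverse (real (Suc n))) \<longlonglongrightarrow> e"
      using tendsto_add[OF tendsto_const LIMSEQ_inverse_real_of_nat, of e] by simp
    show "\<forall>\<^sub>F n in sequentially. e \<le> V (w n)"
      unfolding e_def V_def using moreau_env_le[OF bdd l w(1)] by simp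
    show "\<forall>\<^sub>F n in sequentially. V (w n) \<le> e + inverse (real (Suc n))"
      by (intro always_eventually allI less_imp_le[OF w(2)])
  qed
  then show ?thesis
    using that w(1) unfolding V_def e_def by blast
qed

lemma is_prox_limit_exists:
  fixes phi :: "'a::{real_inner,complete_space} \<Rightarrow> real"
  assumes X: "convex X" "X \<noteq> {}" and bdd: "bdd_below (phi ` X)"
    and wc: "midpoint_weakly_convex_on c X phi" and l: "c < l" "0 < l"
  shows "\<exists>P. is_prox_limit phi X l z P"
proof -
  obtain w where w: "\<And>n. w n \<in> X"
    and Vw: "(\<lambda>n. phi (w n) + l / 2 * (norm (w n - z))\<^sup>2) \<longlonglongrightarrow> moreau_env phi X l z"
    by (rule moreau_minimizing_sequence[OF X(2) bdd less_imp_le[OF l(2)], where z=z]) blast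
  define d where "d n = phi (w n) + l / 2 * (norm (w n - z))\<^sup>2 - moreau_env phi X l z" for n
  have "d \<longlonglongrightarrow> 0"
    using Vw unfolding d_def by (simp add: LIM_zero)
  moreover have "0 < (l - c) / 4" using l by simp
  moreover have "(l - c) / 4 * (dist (w m) (w n))\<^sup>2 \<le> d m + d n" for m n
    using moreau_objective_growth[OF X(1) bdd wc l w w, of z m n]
    unfolding d_def dist_norm by simp
  ultimately have "Cauchy w"
    by (rule Cauchy_if_pairwise_bound)
  then have "convergent w" by (rule Cauchy_convergent)
  then obtain P where "w \<longlonglongrightarrow> P" unfolding convergent_def ..
  moreover have "range w \<subseteq> X" using w by auto
  ultimately have "is_prox_limit phi X l z P"
    unfolding is_prox_limit_def using Vw by blast
  then show ?thesis ..
qed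

lemma is_prox_limit_growth:
  fixes phi :: "'a::real_inner \<Rightarrow> real"
  assumes X: "convex X" and bdd: "bdd_below (phi ` X)"
    and wc: "midpoint_weakly_convex_on c X phi" and l: "c < l" "0 < l"
    and P: "is_prox_limit phi X l z P" and v: "v \<in> X"
  shows "moreau_env phi X l z + (l - c) / 4 * (norm (P - v))\<^sup>2 \<le> phi v + l / 2 * (norm (v - z))\<^sup>2"
proof -
  obtain w where w: "range w \<subseteq> X" "w \<longlonglongrightarrow> P"
    "(\<lambda>n. phi (w n) + l / 2 * (norm (w n - z))\<^sup>2) \<longlonglongrightarrow> moreau_env phi X l z"
    using P unfolding is_prox_limit_def by blast
  have "(\<lambda>n. 2 * moreau_env phi X l z - (phi (w n) + l / 2 * (norm (w n - z))\<^sup>2)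
      + (l - c) / 4 * (norm (w n - v))\<^sup>2)
    \<longlonglongrightarrow> 2 * moreau_env phi X l z - moreau_env phi X l z + (l - c) / 4 * (norm (P - v))\<^sup>2"
    by (intro tendsto_intros w(2,3))
  moreover have "2 * moreau_env phi X l z - (phi (w n) + l / 2 * (norm (w n - z))\<^sup>2)
      + (l - c) / 4 * (norm (w n - v))\<^sup>2 \<le> phi v + l / 2 * (norm (v - z))\<^sup>2" for n
    using moreau_objective_growth[OF X bdd wc l _ v, of "w n" z] w(1) by auto
  ultimately have "2 * moreau_env phi X l z - moreau_env phi X l z + (l - c) / 4 * (norm (P - v))\<^sup>2
      \<le> phi v + l / 2 * (norm (v - z))\<^sup>2"
    by (intro LIMSEQ_le_const2) auto
  then show ?thesis by simp
qed

lemma moreau_objective_shift: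
  fixes u z h :: "'a::real_inner"
  shows "l / 2 * (norm (u - (z + h)))\<^sup>2
    = l / 2 * (norm (u - z))\<^sup>2 - l * inner (u - z) h + l / 2 * (norm h)\<^sup>2"
  by (simp add: power2_norm_eq_inner algebra_simps inner_diff_left inner_diff_right
      inner_add_left inner_add_right inner_commute)

lemma moreau_env_upper_expansion:
  fixes phi :: "'a::real_inner \<Rightarrow> real"
  assumes bdd: "bdd_below (phi ` X)" and l: "0 \<le> l" and P: "is_prox_limit phi X l z P"
  shows "moreau_env phi X l (z + h) \<le> moreau_env phi X l z + l * inner (z - P) h + l / 2 * (norm h)\<^sup>2"
proof -
  obtain w where w: "range w \<subseteq> X" "w \<longlonglongrightarrow> P"
    "(\<lambda>n. phi (w n) + l / 2 * (norm (w n - z))\<^sup>2) \<longlonglongrightarrow> moreau_env phi X l z"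
    using P unfolding is_prox_limit_def by blast
  have "(\<lambda>n. phi (w n) + l / 2 * (norm (w n - z))\<^sup>2 - l * inner (w n - z) h + l / 2 * (norm h)\<^sup>2)
    \<longlonglongrightarrow> moreau_env phi X l z - l * inner (P - z) h + l / 2 * (norm h)\<^sup>2"
    by (intro tendsto_intros w(2,3))
  moreover have "moreau_env phi X l (z + h)
      \<le> phi (w n) + l / 2 * (norm (w n - z))\<^sup>2 - l * inner (w n - z) h + l / 2 * (norm h)\<^sup>2" for n
  proof -
    have "w n \<in> X" using w(1) by auto
    then show ?thesis
      using moreau_env_le[OF bdd l, of "w n" "z + h"] moreau_objective_shift[of l "w n" z h] by linarith
  qed
  ultimately have "moreau_env phi X l (z + h)
      \<le> moreau_env phi X l z - l * inner (P - z) h + l / 2 * (norm h)\<^sup>2"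
    by (intro LIMSEQ_le_const) auto
  moreover have "inner (P - z) h = - inner (z - P) h"
    by (simp add: inner_diff_left)
  ultimately show ?thesis by simp
qed

lemma is_prox_limit_shift_bound:
  fixes phi :: "'a::real_inner \<Rightarrow> real"
  assumes X: "convex X" and bdd: "bdd_below (phi ` X)"
    and wc: "midpoint_weakly_convex_on c X phi" and l: "c < l" "0 < l"
    and P: "is_prox_limit phi X l x P" and Q: "is_prox_limit phi X l (x + h) Q"
  shows "moreau_env phi X l x + (l - c) / 4 * (norm (P - Q))\<^sup>2
    \<le> moreau_env phi X l (x + h) + l * inner (Q - (x + h)) h + l / 2 * (norm h)\<^sup>2"
proof -
  define e where "e = moreau_env phi X l"
  obtain w where w: "range w \<subseteq> X" "w \<longlonglongrightarrow> Q"
    "(\<lambda>n. phi (w n) + l / 2 * (norm (w n - (x + h)))\<^sup>2) \<longlonglongrightarrow> e (x + h)"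
    using Q unfolding is_prox_limit_def e_def by blast
  have "(\<lambda>n. e x + (l - c) / 4 * (norm (P - w n))\<^sup>2) \<longlonglongrightarrow> e x + (l - c) / 4 * (norm (P - Q))\<^sup>2"
    by (intro tendsto_intros w(2))
  moreover have "(\<lambda>n. phi (w n) + l / 2 * (norm (w n - (x + h)))\<^sup>2 + l * inner (w n - (x + h)) h
      + l / 2 * (norm h)\<^sup>2) \<longlonglongrightarrow> e (x + h) + l * inner (Q - (x + h)) h + l / 2 * (norm h)\<^sup>2"
    by (intro tendsto_intros w(2,3))
  moreover have "e x + (l - c) / 4 * (norm (P - w n))\<^sup>2
      \<le> phi (w n) + l / 2 * (norm (w n - (x + h)))\<^sup>2 + l * inner (w n - (x + h)) h + l / 2 * (norm h)\<^sup>2"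
    for n
  proof -
    have "l / 2 * (norm (w n - x))\<^sup>2
        = l / 2 * (norm (w n - (x + h)))\<^sup>2 + l * inner (w n - (x + h)) h + l / 2 * (norm h)\<^sup>2"
      using moreau_objective_shift[of l "w n" "x + h" "- h"] by (simp add: inner_minus_right)
    moreover have "w n \<in> X" using w(1) by auto
    ultimately show ?thesis
      using is_prox_limit_growth[OF X bdd wc l P, of "w n"] unfolding e_def by linarith
  qed
  ultimately show ?thesis
    unfolding e_def by (intro LIMSEQ_le) auto
qed

lemma moreau_env_lower_expansion:
  fixes phi :: "'a::real_inner \<Rightarrow> real"
  assumes X: "convex X" and bdd: "bdd_below (phi ` X)"
    and wc: "midpoint_weakly_convex_on c X phi" and l: "c < l" "0 < l"
    and P: "is_prox_limit phi X l x P" and Q: "is_prox_limit phi X l (x + h) Q"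
  shows "moreau_env phi X l x + l * inner (x - P) h - 4 * l\<^sup>2 / (l - c) * (norm h)\<^sup>2
    \<le> moreau_env phi X l (x + h)"
proof -
  define e where "e = moreau_env phi X l"
  define k where "k = l - c"
  have k: "0 < k" using l by (simp add: k_def)
  have shift: "e x + k / 4 * (norm (P - Q))\<^sup>2 \<le> e (x + h) + l * inner (Q - (x + h)) h + l / 2 * (norm h)\<^sup>2"
    unfolding e_def k_def by (rule is_prox_limit_shift_bound[OF X bdd wc l P Q])
  have upper: "e (x + h) \<le> e x + l * inner (x - P) h + l / 2 * (norm h)\<^sup>2"
    unfolding e_def using moreau_env_upper_expansion[OF bdd _ P] l by simp
  have split: "l * inner (Q - (x + h)) h = - (l * inner (x - P) h) + l * inner (Q - P) h - l * (norm h)\<^sup>2"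
    by (simp add: inner_diff_left inner_add_left power2_norm_eq_inner algebra_simps)
  have PQ_h: "l * inner (Q - P) h \<le> l * (norm (P - Q) * norm h)"
    using norm_cauchy_schwarz[of "Q - P" h] l by (simp add: norm_minus_commute)
  have "k / 4 * (norm (P - Q))\<^sup>2 \<le> l * (norm (P - Q) * norm h)"
    using shift upper split PQ_h by linarith
  then have "norm (P - Q) \<le> 4 * l / k * norm h"
    using k l by (cases "P = Q") (auto simp: power2_eq_square field_simps)
  then have "l * (norm (P - Q) * norm h) \<le> l * (4 * l / k * norm h * norm h)"
    using l by (intro mult_left_mono mult_right_mono) auto
  also have "\<dots> = 4 * l\<^sup>2 / k * (norm h)\<^sup>2"
    by (simp add: power2_eq_square)
  finally have "l * (norm (P - Q) * norm h) \<le> 4 * l\<^sup>2 / k * (norm h)\<^sup>2" .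
  moreover have "0 \<le> k / 4 * (norm (P - Q))\<^sup>2" "0 \<le> l / 2 * (norm h)\<^sup>2"
    using k l by simp_all
  ultimately show ?thesis
    using shift split PQ_h unfolding e_def k_def by linarith
qed

lemma moreau_env_has_derivative:
  fixes phi :: "'a::{real_inner,complete_space} \<Rightarrow> real"
  assumes X: "convex X" "X \<noteq> {}" and bdd: "bdd_below (phi ` X)"
    and wc: "midpoint_weakly_convex_on c X phi" and l: "c < l" "0 < l"
    and P: "is_prox_limit phi X l x P"
  shows "(moreau_env phi X l has_derivative (\<lambda>h. inner (l *\<^sub>R (x - P)) h)) (at x)"
proof (rule has_derivative_if_quadratic_remainder)
  fix h
  obtain Q where Q: "is_prox_limit phi X l (x + h) Q"
    using is_prox_limit_exists[OF X bdd wc l] by blast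
  have "0 \<le> 4 * l\<^sup>2 / (l - c) * (norm h)\<^sup>2" "0 \<le> l / 2 * (norm h)\<^sup>2"
    using l by simp_all
  moreover have "(l / 2 + 4 * l\<^sup>2 / (l - c)) * (norm h)\<^sup>2
      = l / 2 * (norm h)\<^sup>2 + 4 * l\<^sup>2 / (l - c) * (norm h)\<^sup>2"
    by (rule distrib_right)
  ultimately show "\<bar>moreau_env phi X l (x + h) - moreau_env phi X l x - inner (l *\<^sub>R (x - P)) h\<bar>
      \<le> (l / 2 + 4 * l\<^sup>2 / (l - c)) * (norm h)\<^sup>2"
    using moreau_env_upper_expansion[OF bdd _ P, of h] moreau_env_lower_expansion[OF X(1) bdd wc l P Q] l
    unfolding abs_le_iff inner_scaleR_left by linarith
qed

section \<open>Projected gradient steps on an inexact model\<close>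

definition proj_step_residual :: "real \<Rightarrow> 'a::real_normed_vector \<Rightarrow> 'a \<Rightarrow> 'a \<Rightarrow> real"
  where "proj_step_residual gam x G x' =
    sqrt ((norm ((x - gam *\<^sub>R G) - x))\<^sup>2 / gam\<^sup>2 - (norm ((x - gam *\<^sub>R G) - x'))\<^sup>2 / gam\<^sup>2)"

lemma projected_step_length:
  fixes X :: "'a::real_inner set"
  assumes X: "convex X" and x: "x \<in> X" and gam: "0 < gam"
    and pr: "is_proj X (x - gam *\<^sub>R G) x'"
  defines "s \<equiv> proj_step_residual gam x G x'"
  shows "norm (x' - x) \<le> gam * s"
    and "inner G (x' - x) + (norm (x' - x))\<^sup>2 / (2 * gam) = - (gam * s\<^sup>2 / 2)"
proof -
  define E where "E = (norm ((x - gam *\<^sub>R G) - x))\<^sup>2 / gam\<^sup>2 - (norm ((x - gam *\<^sub>R G) - x'))\<^sup>2 / gam\<^sup>2"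
  define D where "D = x' - x"
  have x': "x' = x + D" by (simp add: D_def)
  have DD: "inner D D = (norm D)\<^sup>2" by (simp add: power2_norm_eq_inner)
  have "(norm ((x - gam *\<^sub>R G) - x))\<^sup>2 = gam\<^sup>2 * inner G G"
    by (simp add: power2_norm_eq_inner[symmetric] power_mult_distrib norm_minus_commute)
  moreover have "(norm ((x - gam *\<^sub>R G) - x'))\<^sup>2 = gam\<^sup>2 * inner G G + 2 * gam * inner G D + inner D D"
    unfolding x' power2_norm_eq_inner by (simp add: inner_diff_left inner_diff_right
        inner_add_left inner_add_right inner_commute algebra_simps power2_eq_square)
  ultimately have gE: "gam\<^sup>2 * E = - 2 * gam * inner G D - inner D D"
    unfolding E_def using gam by (simp add: field_simps)
  have "gam * inner G D + inner D D \<le> 0"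
    using is_proj_obtuse_angle[OF X pr x] unfolding x'
    by (simp add: inner_diff_left inner_diff_right inner_add_left inner_add_right inner_commute algebra_simps)
  then have nD: "(norm D)\<^sup>2 \<le> gam\<^sup>2 * E" using gE DD by linarith
  then have "0 \<le> gam\<^sup>2 * E" by (meson order_trans zero_le_power2)
  moreover have s_E: "s = sqrt E" unfolding s_def E_def proj_step_residual_def ..
  ultimately have sE: "s\<^sup>2 = E" using gam by (simp add: zero_le_mult_iff)
  have "norm D = sqrt ((norm D)\<^sup>2)" by simp
  also have "\<dots> \<le> sqrt (gam\<^sup>2 * E)" using nD by (rule real_sqrt_le_mono)
  also have "\<dots> = gam * s" using gam by (simp add: real_sqrt_mult s_E)
  finally show "norm (x' - x) \<le> gam * s" by (simp add: D_def)
  have "inner G D = - (gam\<^sup>2 * E + inner D D) / (2 * gam)" using gE gam by (simp add: field_simps)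
  then show "inner G (x' - x) + (norm (x' - x))\<^sup>2 / (2 * gam) = - (gam * s\<^sup>2 / 2)"
    using gam unfolding D_def[symmetric] DD[symmetric] sE by (simp add: field_simps power2_eq_square)
qed

lemma projected_step_residual_lower:
  fixes X :: "'a::real_inner set"
  assumes X: "convex X" and x: "x \<in> X" and gam: "0 < gam"
    and pr: "is_proj X (x - gam *\<^sub>R G) x'" and u: "u \<in> X"
  defines "s \<equiv> proj_step_residual gam x G x'"
  shows "- (gam * s\<^sup>2 / 2) - s * norm (u - x) \<le> inner G (u - x)"
proof -
  note length = projected_step_length[OF X x gam pr, folded s_def]
  define D where "D = x' - x"
  have "gam * inner G D - inner D (u - x) + (norm D)\<^sup>2 \<le> gam * inner G (u - x)"
    using is_proj_obtuse_angle[OF X pr u] unfolding D_def power2_norm_eq_inner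
    by (simp add: inner_diff_left inner_diff_right inner_commute algebra_simps)
  moreover have "gam * inner G D = - (gam * (gam * s\<^sup>2 / 2)) - (norm D)\<^sup>2 / 2"
    using length(2) gam unfolding D_def[symmetric] by (simp add: field_simps)
  moreover have "inner D (u - x) \<le> gam * s * norm (u - x)"
    using norm_cauchy_schwarz[of D "u - x"] mult_right_mono[OF length(1) norm_ge_zero, of "u - x"]
    unfolding D_def by linarith
  moreover have "gam * (- (gam * s\<^sup>2 / 2) - s * norm (u - x)) = - (gam * (gam * s\<^sup>2 / 2)) - gam * s * norm (u - x)"
    by (simp add: algebra_simps)
  moreover have "0 \<le> (norm D)\<^sup>2" by simp
  ultimately have "gam * (- (gam * s\<^sup>2 / 2) - s * norm (u - x)) \<le> gam * inner G (u - x)"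
    by linarith
  then show ?thesis
    using gam by (simp add: mult_le_cancel_left_pos)
qed

lemma projected_step_descent:
  fixes X :: "'a::real_inner set"
  assumes X: "convex X" and x: "x \<in> X" and gam: "0 < gam"
    and pr: "is_proj X (x - gam *\<^sub>R G) x'"
    and M: "M * gam \<le> 1" and a: "0 \<le> a"
    and up: "Psi x' \<le> Psi x + inner G (x' - x) + M / 2 * (norm (x' - x))\<^sup>2 + a * norm (x' - x)"
  defines "s \<equiv> proj_step_residual gam x G x'"
  shows "Psi x' \<le> Psi x - gam * s\<^sup>2 / 2 + a * gam * s"
proof -
  note step = projected_step_length[OF X x gam pr, folded s_def]
  have "M \<le> 1 / gam" using M gam by (simp add: field_simps)
  then have "M / 2 * (norm (x' - x))\<^sup>2 \<le> (norm (x' - x))\<^sup>2 / (2 * gam)"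
    using mult_right_mono[of M "1 / gam" "(norm (x' - x))\<^sup>2 / 2"] by simp
  moreover have "a * norm (x' - x) \<le> a * gam * s"
    using mult_left_mono[OF step(1) a] by (simp add: mult.assoc)
  ultimately show ?thesis
    using up step(2) by linarith
qed

lemma projected_step_envelope_gradient:
  fixes phi Psi :: "'a::{real_inner,complete_space} \<Rightarrow> real"
  assumes X: "convex X" "X \<noteq> {}" and bdd: "bdd_below (phi ` X)"
    and wc: "midpoint_weakly_convex_on c X phi" and L: "c < 2 * L" "0 < L"
    and x: "x \<in> X" and gam: "0 < gam" and pr: "is_proj X (x - gam *\<^sub>R G) x'"
    and below: "\<And>z. z \<in> X \<Longrightarrow> Psi z \<le> phi z" and above: "phi x \<le> Psi x + b"
    and lo: "\<And>z. z \<in> X \<Longrightarrow> Psi x + inner G (z - x) - L / 2 * (norm (z - x))\<^sup>2 - a * norm (z - x) \<le> Psi z"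
  defines "s \<equiv> proj_step_residual gam x G x'"
  shows "\<exists>g. (moreau_env phi X (2 * L) has_derivative (\<lambda>h. inner g h)) (at x) \<and>
    (norm g)\<^sup>2 \<le> 4 * (s + a) * norm g + 8 * L * b + 4 * L * gam * s\<^sup>2"
proof -
  have l: "c < 2 * L" "0 < 2 * L" using L by simp_all
  obtain P where P: "is_prox_limit phi X (2 * L) x P"
    using is_prox_limit_exists[OF X bdd wc l] by blast
  then obtain w where w: "range w \<subseteq> X" "w \<longlonglongrightarrow> P"
    "(\<lambda>n. phi (w n) + L * (norm (w n - x))\<^sup>2) \<longlonglongrightarrow> moreau_env phi X (2 * L) x"
    unfolding is_prox_limit_def by auto
  have "L / 2 * (norm (w n - x))\<^sup>2 \<le> (s + a) * norm (w n - x) + b + gam * s\<^sup>2 / 2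
      + (phi (w n) + L * (norm (w n - x))\<^sup>2 - phi x)" for n
  proof -
    have wn: "w n \<in> X" using w(1) by auto
    have "- (s * norm (w n - x)) \<le> inner G (w n - x) + gam * s\<^sup>2 / 2"
      using projected_step_residual_lower[OF X(1) x gam pr wn, folded s_def] by linarith
    then show ?thesis
      using lo[OF wn] below[OF wn] above by (simp add: algebra_simps)
  qed
  moreover have "(\<lambda>n. L / 2 * (norm (w n - x))\<^sup>2) \<longlonglongrightarrow> L / 2 * (norm (P - x))\<^sup>2"
    by (intro tendsto_intros w(2))
  moreover have "(\<lambda>n. (s + a) * norm (w n - x) + b + gam * s\<^sup>2 / 2
      + (phi (w n) + L * (norm (w n - x))\<^sup>2 - phi x))
    \<longlonglongrightarrow> (s + a) * norm (P - x) + b + gam * s\<^sup>2 / 2 + (moreau_env phi X (2 * L) x - phi x)"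
    by (intro tendsto_intros w(2,3))
  ultimately have R: "L / 2 * (norm (P - x))\<^sup>2
      \<le> (s + a) * norm (P - x) + b + gam * s\<^sup>2 / 2 + (moreau_env phi X (2 * L) x - phi x)"
    by (intro LIMSEQ_le) auto
  have "moreau_env phi X (2 * L) x \<le> phi x"
    using moreau_env_le[OF bdd _ x, of "2 * L" x] L by simp
  with R have R': "L / 2 * (norm (P - x))\<^sup>2 \<le> (s + a) * norm (P - x) + b + gam * s\<^sup>2 / 2"
    by linarith
  have ng: "norm ((2 * L) *\<^sub>R (x - P)) = 2 * L * norm (P - x)"
    using L by (simp add: norm_minus_commute)
  have "(norm ((2 * L) *\<^sub>R (x - P)))\<^sup>2 = 8 * L * (L / 2 * (norm (P - x))\<^sup>2)"
    unfolding ng by (simp add: power2_eq_square)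
  also have "\<dots> \<le> 8 * L * ((s + a) * norm (P - x) + b + gam * s\<^sup>2 / 2)"
    using R' L by (intro mult_left_mono) auto
  also have "\<dots> = 4 * (s + a) * norm ((2 * L) *\<^sub>R (x - P)) + 8 * L * b + 4 * L * gam * s\<^sup>2"
    unfolding ng by (simp add: algebra_simps)
  finally show ?thesis
    using moreau_env_has_derivative[OF X bdd wc l P] by blast
qed

section \<open>Algorithm 2\<close>

lemma telescoping_descent:
  fixes Psi d :: "nat \<Rightarrow> real"
  assumes "\<And>t. t < T \<Longrightarrow> Psi (Suc t) \<le> Psi t - d t"
  shows "(\<Sum>t<T. d t) \<le> Psi 0 - Psi T"
  using assms
proof (induction T)
  case (Suc T)
  then have "(\<Sum>t<T. d t) \<le> Psi 0 - Psi T" by simp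
  moreover have "Psi (Suc T) \<le> Psi T - d T" using Suc.prems by simp
  ultimately show ?case by simp
qed simp

lemma iteration_budget_exceeds_decrease:
  fixes gam L a b eps Dlt :: real
  assumes gam: "0 < gam" and L: "0 < L" and eps: "0 < eps"
    and hyp: "(a \<le> eps / 200 \<and> b = 0) \<or> (a = 0 \<and> 40000 * L * b \<le> eps\<^sup>2)"
    and budget: "700 * Dlt / eps\<^sup>2 + 1 / L \<le> real T * gam" and Dlt: "0 \<le> Dlt"
  shows "Dlt + b < real T * (gam * (eps / 6) * (eps / 12 - a))"
proof -
  define Z where "Z = real T * gam * eps\<^sup>2"
  have "(700 * Dlt / eps\<^sup>2 + 1 / L) * eps\<^sup>2 \<le> Z"
    unfolding Z_def using budget by (intro mult_right_mono) auto
  moreover have "(700 * Dlt / eps\<^sup>2 + 1 / L) * eps\<^sup>2 = 700 * Dlt + eps\<^sup>2 / L"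
    using eps by (simp add: field_simps)
  ultimately have Z: "700 * Dlt + eps\<^sup>2 / L \<le> Z" by simp
  have p: "0 < eps\<^sup>2 / L" using eps L by simp
  show ?thesis
    using hyp
  proof
    assume "a \<le> eps / 200 \<and> b = 0"
    moreover have "real T * (gam * (eps / 6) * (47 * eps / 1200)) \<le> real T * (gam * (eps / 6) * (eps / 12 - a))"
      if "a \<le> eps / 200"
      using that gam eps by (intro mult_left_mono) auto
    moreover have "real T * (gam * (eps / 6) * (47 * eps / 1200)) = 47 / 7200 * Z"
      by (simp add: Z_def power2_eq_square)
    ultimately show ?thesis
      using Z p Dlt by linarith
  next
    assume ab: "a = 0 \<and> 40000 * L * b \<le> eps\<^sup>2"
    then have "40000 * b \<le> eps\<^sup>2 / L" using L by (simp add: field_simps)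
    moreover have "real T * (gam * (eps / 6) * (eps / 12 - a)) = Z / 72"
      using ab by (simp add: Z_def power2_eq_square)
    ultimately show ?thesis
      using Z p Dlt by linarith
  qed
qed

lemma min_residual_small:
  fixes s :: "nat \<Rightarrow> real"
  assumes gam: "0 < gam" and L: "0 < L" and eps: "0 < eps"
    and hyp: "(a \<le> eps / 200 \<and> b = 0) \<or> (a = 0 \<and> 40000 * L * b \<le> eps\<^sup>2)"
    and budget: "700 * Dlt / eps\<^sup>2 + 1 / L \<le> real T * gam" and Dlt: "0 \<le> Dlt"
    and total: "(\<Sum>t<T. gam * (s t)\<^sup>2 / 2 - a * gam * s t) \<le> Dlt + b"
    and t0: "t0 < T" "\<And>t. t < T \<Longrightarrow> s t0 \<le> s t"
  shows "s t0 \<le> eps / 6"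
proof (rule ccontr)
  assume "\<not> ?thesis"
  then have big: "eps / 6 \<le> s t" if "t < T" for t
    using t0(2)[OF that] by simp
  have "a \<le> eps / 12" using hyp eps by auto
  have "gam * (eps / 6) * (eps / 12 - a) \<le> gam * (s t)\<^sup>2 / 2 - a * gam * s t" if "t < T" for t
  proof -
    have "gam * (eps / 6) * (eps / 12 - a) \<le> gam * s t * (eps / 12 - a)"
      using big[OF that] gam \<open>a \<le> eps / 12\<close> by (intro mult_right_mono mult_left_mono) auto
    also have "\<dots> \<le> gam * s t * (s t / 2 - a)"
      using big[OF that] gam eps by (intro mult_left_mono) auto
    finally show ?thesis by (simp add: power2_eq_square algebra_simps)
  qed
  then have "(\<Sum>t<T. gam * (eps / 6) * (eps / 12 - a)) \<le> (\<Sum>t<T. gam * (s t)\<^sup>2 / 2 - a * gam * s t)"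
    by (intro sum_mono) simp
  then show False
    using total iteration_budget_exceeds_decrease[OF gam L eps hyp budget Dlt] by simp
qed

lemma envelope_gradient_small:
  fixes N s gam L a b eps :: real
  assumes gam: "0 < gam" and L: "0 < L" and gL: "gam * L \<le> 1 / 3" and a: "0 \<le> a"
    and eps: "0 < eps"
    and hyp: "(a \<le> eps / 200 \<and> b = 0) \<or> (a = 0 \<and> 40000 * L * b \<le> eps\<^sup>2)"
    and s: "0 \<le> s" "s \<le> eps / 6" and N: "0 \<le> N"
    and NN: "N\<^sup>2 \<le> 4 * (s + a) * N + 8 * L * b + 4 * L * gam * s\<^sup>2"
  shows "N \<le> eps"
proof (rule ccontr)
  assume "\<not> ?thesis"
  then have Ne: "eps < N" by simp
  have "a \<le> eps / 200" using hyp eps by auto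
  then have "4 * (s + a) * N \<le> 4 * (eps / 6 + eps / 200) * N"
    using s a N by (intro mult_right_mono) auto
  also have "\<dots> \<le> 4 * (eps / 6 + eps / 200) * N * (N / eps)"
    using Ne eps N by (simp add: field_simps)
  finally have t1: "4 * (s + a) * N \<le> (103 / 150) * N\<^sup>2"
    using eps by (simp add: power2_eq_square field_simps)
  have "(L * gam) * s\<^sup>2 \<le> (1 / 3) * (eps / 6)\<^sup>2"
    using s gam L gL by (intro mult_mono power_mono) (auto simp: mult.commute)
  then have t2: "4 * L * gam * s\<^sup>2 \<le> eps\<^sup>2 / 27" by (simp add: power2_eq_square)
  have t3: "8 * L * b \<le> eps\<^sup>2 / 5000" using hyp by auto
  have "eps\<^sup>2 < N\<^sup>2" using Ne eps by (intro power_strict_mono) auto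
  moreover have "0 \<le> eps\<^sup>2" by simp
  ultimately show False using NN t1 t2 t3 by linarith
qed

lemma alg2_output_minimizes_eps:
  assumes "0 < T"
  obtains t0 where "t0 < T" "alg2_output gam T xs xt = xs t0"
    "\<And>t. t < T \<Longrightarrow> alg2_eps gam xs xt t0 \<le> alg2_eps gam xs xt t"
proof -
  define P where "P t \<longleftrightarrow> t < T \<and> (\<forall>s<T. alg2_eps gam xs xt t \<le> alg2_eps gam xs xt s)" for t
  define t1 where "t1 = arg_min_on (alg2_eps gam xs xt) {..<T}"
  have "P t1"
    using arg_min_if_finite(1)[of "{..<T}"] arg_min_least[of "{..<T}"] assms
    unfolding P_def t1_def by auto
  then have "P (LEAST t. P t)" by (rule LeastI)
  moreover have "alg2_output gam T xs xt = xs (LEAST t. P t)"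
    using assms unfolding alg2_output_def P_def by simp
  ultimately show ?thesis
    using that unfolding P_def by blast
qed

text \<open>Since \<open>sqrt\<close> is negative on negative reals, nonnegativity of \<open>\<epsilon>\<^sub>t\<close> needs the projection.\<close>
lemma alg2_eps_nonneg:
  assumes "is_proj X (xt (Suc t)) (xs (Suc t))" "xs t \<in> X"
  shows "0 \<le> alg2_eps gam xs xt t"
proof -
  have "norm (xt (Suc t) - xs (Suc t)) \<le> norm (xt (Suc t) - xs t)"
    using assms unfolding is_proj_def by blast
  then have "(norm (xt (Suc t) - xs (Suc t)))\<^sup>2 / gam\<^sup>2 \<le> (norm (xt (Suc t) - xs t))\<^sup>2 / gam\<^sup>2"
    by (intro divide_right_mono power_mono) auto
  then show ?thesis
    unfolding alg2_eps_def by simp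
qed

lemma alg2_eps_eq_proj_step_residual:
  "xt (Suc t) = xs t - gam *\<^sub>R G \<Longrightarrow> alg2_eps gam xs xt t = proj_step_residual gam (xs t) G (xs (Suc t))"
  unfolding alg2_eps_def proj_step_residual_def by simp

lemma alg2_output_stationary:
  fixes xs xt :: "nat \<Rightarrow> 'a::real_inner" and Psi phi :: "'a \<Rightarrow> real"
  assumes gam: "0 < gam" and L: "0 < L" and gL: "gam * L \<le> 1 / 3" and a: "0 \<le> a" and b: "0 \<le> b"
    and eps: "0 < eps" and hyp: "(a \<le> eps / 200 \<and> b = 0) \<or> (a = 0 \<and> 40000 * L * b \<le> eps\<^sup>2)"
    and budget: "700 * Dlt / eps\<^sup>2 + 1 / L \<le> real T * gam" and Dlt: "0 \<le> Dlt"
    and total: "Psi (xs 0) - Psi (xs T) \<le> Dlt + b"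
    and in_X: "\<And>t. t < T \<Longrightarrow> xs t \<in> X"
    and proj: "\<And>t. t < T \<Longrightarrow> is_proj X (xt (Suc t)) (xs (Suc t))"
    and descent: "\<And>t. t < T \<Longrightarrow> Psi (xs (Suc t))
      \<le> Psi (xs t) - gam * (alg2_eps gam xs xt t)\<^sup>2 / 2 + a * gam * alg2_eps gam xs xt t"
    and envelope: "\<And>t. t < T \<Longrightarrow> \<exists>g.
      (moreau_env phi X (2 * L) has_derivative (\<lambda>h. inner g h)) (at (xs t)) \<and>
      (norm g)\<^sup>2 \<le> 4 * (alg2_eps gam xs xt t + a) * norm g + 8 * L * b + 4 * L * gam * (alg2_eps gam xs xt t)\<^sup>2"
  shows "alg2_output gam T xs xt \<in> X \<and>
    (\<exists>g. (moreau_env phi X (2 * L) has_derivative (\<lambda>h. inner g h)) (at (alg2_output gam T xs xt))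
      \<and> norm g \<le> eps)"
proof -
  define s where "s = alg2_eps gam xs xt"
  have "0 \<le> 700 * Dlt / eps\<^sup>2" "0 < 1 / L" using Dlt L by simp_all
  then have "0 < real T * gam" using budget by linarith
  then have "0 < T" using gam by (simp add: zero_less_mult_iff)
  then obtain t0 where t0: "t0 < T" "alg2_output gam T xs xt = xs t0" "\<And>t. t < T \<Longrightarrow> s t0 \<le> s t"
    using alg2_output_minimizes_eps unfolding s_def by metis
  have "(\<Sum>t<T. gam * (s t)\<^sup>2 / 2 - a * gam * s t) \<le> Psi (xs 0) - Psi (xs T)"
    using descent unfolding s_def by (intro telescoping_descent[where Psi="\<lambda>t. Psi (xs t)"]) fastforce
  with total have "(\<Sum>t<T. gam * (s t)\<^sup>2 / 2 - a * gam * s t) \<le> Dlt + b" by simp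
  then have "s t0 \<le> eps / 6"
    by (rule min_residual_small[where s=s, OF gam L eps hyp budget Dlt _ t0(1,3)])
  moreover obtain g where g: "(moreau_env phi X (2 * L) has_derivative (\<lambda>h. inner g h)) (at (xs t0))"
    "(norm g)\<^sup>2 \<le> 4 * (s t0 + a) * norm g + 8 * L * b + 4 * L * gam * (s t0)\<^sup>2"
    using envelope[OF t0(1)] unfolding s_def by blast
  moreover have "0 \<le> s t0"
    unfolding s_def by (rule alg2_eps_nonneg[where xs=xs and xt=xt, OF proj[OF t0(1)] in_X[OF t0(1)]])
  ultimately have "norm g \<le> eps"
    using envelope_gradient_small[OF gam L gL a eps hyp] by simp
  then show ?thesis
    using g(1) in_X[OF t0(1)] t0(2) by auto
qed

lemma alg2_runD:
  assumes "alg2_run X Y gx_f gy_f Hxy x0 yhat gam_x T coupled gam_y xs ys xt"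
  shows "xs 0 = x0"
    and "\<And>t. t < T \<Longrightarrow> is_proj X (xt (Suc t)) (xs (Suc t))"
    and "\<And>t. t < T \<Longrightarrow> coupled \<Longrightarrow> is_proj Y (yhat + gam_y *\<^sub>R gy_f (xs t) yhat) (ys t) \<and>
      xt (Suc t) = xs t - gam_x *\<^sub>R (gx_f (xs t) yhat + Hxy (xs t) yhat (ys t - yhat))"
    and "\<And>t. t < T \<Longrightarrow> \<not> coupled \<Longrightarrow> ys t \<in> Y \<and> xt (Suc t) = xs t - gam_x *\<^sub>R gx_f (xs t) (ys t)"
  using assms unfolding alg2_run_def by auto

lemma alg2_run_in_X:
  assumes run: "alg2_run X Y gx_f gy_f Hxy x0 yhat gam_x T coupled gam_y xs ys xt" and x0: "x0 \<in> X"
  shows "t \<le> T \<Longrightarrow> xs t \<in> X"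
proof (induction t)
  case 0
  then show ?case using alg2_runD(1)[OF run] x0 by simp
next
  case (Suc t)
  then show ?case using alg2_runD(2)[OF run, of t] unfolding is_proj_def by simp
qed

lemma iteration_budget:
  fixes L rho mu eps Dlt :: real
  assumes L: "0 < L" and rho: "0 < rho"
    and T: "(3 + mu\<^sup>2 / (L * rho)) * (700 * L * Dlt / eps\<^sup>2 + 1) \<le> real T"
  shows "700 * Dlt / eps\<^sup>2 + 1 / L \<le> real T * (1 / (3 * L + mu\<^sup>2 / rho))"
proof -
  define q where "q = 3 + mu\<^sup>2 / (L * rho)"
  have q: "3 \<le> q" using L rho by (simp add: q_def)
  have "3 * L + mu\<^sup>2 / rho = L * q" using L rho by (simp add: q_def field_simps)
  moreover have "q * (700 * L * Dlt / eps\<^sup>2 + 1) / (L * q) = 700 * Dlt / eps\<^sup>2 + 1 / L"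
    using L q by (simp add: field_simps)
  moreover have "q * (700 * L * Dlt / eps\<^sup>2 + 1) / (L * q) \<le> real T / (L * q)"
    using T L q unfolding q_def[symmetric] by (intro divide_right_mono) auto
  ultimately show ?thesis by simp
qed

section \<open>The max function of a smooth minimax problem\<close>

locale smooth_max_problem =
  fixes X :: "'a::euclidean_space set" and Y :: "'b::euclidean_space set"
    and f :: "'a \<Rightarrow> 'b \<Rightarrow> real" and gx_f :: "'a \<Rightarrow> 'b \<Rightarrow> 'a" and gy_f :: "'a \<Rightarrow> 'b \<Rightarrow> 'b"
    and Hxy :: "'a \<Rightarrow> 'b \<Rightarrow> ('b \<Rightarrow>\<^sub>L 'a)"
    and lam mu rho tau D :: real
  assumes X_convex: "convex X" and X_nonempty: "X \<noteq> {}"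
    and Y_convex: "convex Y" and Y_compact: "compact Y" and Y_nonempty: "Y \<noteq> {}"
    and diameter_Y: "diameter Y \<le> D"
    and gx_f: "\<And>x y. x \<in> X \<Longrightarrow> y \<in> Y \<Longrightarrow>
      ((\<lambda>x'. f x' y) has_derivative (\<lambda>h. inner (gx_f x y) h)) (at x within X)"
    and lam_pos: "0 < lam" and mu_nonneg: "0 \<le> mu"
    and gx_f_lipschitz: "\<And>x x' y y'. x \<in> X \<Longrightarrow> x' \<in> X \<Longrightarrow> y \<in> Y \<Longrightarrow> y' \<in> Y \<Longrightarrow>
      norm (gx_f x' y' - gx_f x y) \<le> lam * norm (x' - x) + mu * norm (y' - y)"
    and gy_f: "\<And>x y. x \<in> X \<Longrightarrow> y \<in> Y \<Longrightarrow>
      ((\<lambda>y'. f x y') has_derivative (\<lambda>h. inner (gy_f x y) h)) (at y within Y)"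
    and rho_pos: "0 < rho"
    and gy_f_lipschitz: "\<And>x y y'. x \<in> X \<Longrightarrow> y \<in> Y \<Longrightarrow> y' \<in> Y \<Longrightarrow>
      norm (gy_f x y' - gy_f x y) \<le> rho * norm (y' - y)"
    and Hxy: "\<And>x y. x \<in> X \<Longrightarrow> y \<in> Y \<Longrightarrow>
      ((\<lambda>y'. gx_f x y') has_derivative blinfun_apply (Hxy x y)) (at y within Y)"
    and tau_nonneg: "0 \<le> tau"
    and Hxy_lipschitz: "\<And>x x' y. x \<in> X \<Longrightarrow> x' \<in> X \<Longrightarrow> y \<in> Y \<Longrightarrow>
      norm (Hxy x' y - Hxy x y) \<le> tau * norm (x' - x)"
begin

lemma norm_diff_le_D: "y \<in> Y \<Longrightarrow> y' \<in> Y \<Longrightarrow> norm (y - y') \<le> D"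
  using diameter_bounded_bound[OF compact_imp_bounded[OF Y_compact]] diameter_Y
  by (fastforce simp: dist_norm)

lemma D_nonneg: "0 \<le> D"
  using norm_diff_le_D Y_nonempty by fastforce

lemma f_le_max_fun:
  assumes "x \<in> X" "y \<in> Y"
  shows "f x y \<le> max_fun f Y x"
proof -
  have "continuous_on Y (f x)"
    using has_derivative_continuous_on[OF gy_f[OF assms(1)]] .
  then have "bdd_above (f x ` Y)"
    by (intro bounded_imp_bdd_above compact_imp_bounded compact_continuous_image Y_compact)
  then show ?thesis
    unfolding max_fun_def by (rule cSUP_upper[OF assms(2)])
qed

lemma max_fun_le: "(\<And>y. y \<in> Y \<Longrightarrow> f x y \<le> B) \<Longrightarrow> max_fun f Y x \<le> B"
  unfolding max_fun_def by (rule cSUP_least[OF Y_nonempty])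

lemma f_quadratic_bound_x:
  assumes "x \<in> X" "x' \<in> X" "y \<in> Y"
  shows "\<bar>f x' y - f x y - inner (gx_f x y) (x' - x)\<bar> \<le> lam / 2 * (norm (x' - x))\<^sup>2"
  using gx_f_lipschitz[of _ _ y y] assms
  by (intro lipschitz_gradient_quadratic_bound[OF X_convex gx_f]) auto

lemma f_quadratic_bound_y:
  assumes "x \<in> X" "y \<in> Y" "y' \<in> Y"
  shows "\<bar>f x y' - f x y - inner (gy_f x y) (y' - y)\<bar> \<le> rho / 2 * (norm (y' - y))\<^sup>2"
  using gy_f_lipschitz assms
  by (intro lipschitz_gradient_quadratic_bound[OF Y_convex gy_f]) auto

lemma max_fun_midpoint_weakly_convex: "midpoint_weakly_convex_on lam X (max_fun f Y)"
  unfolding midpoint_weakly_convex_on_def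
proof (intro ballI max_fun_le)
  fix u v y assume u: "u \<in> X" and v: "v \<in> X" and y: "y \<in> Y"
  define m where "m = midpoint u v"
  have m: "m \<in> X"
    using convexD[OF X_convex u v, of "1/2" "1/2"] by (simp add: m_def midpoint_def scaleR_add_right)
  have um: "u - m = (1/2) *\<^sub>R (u - v)" and vm: "v - m = - ((1/2) *\<^sub>R (u - v))"
    by (simp_all add: m_def midpoint_def algebra_simps flip: scaleR_add_left)
  have "lam / 2 * (norm (u - m))\<^sup>2 = lam / 8 * (norm (u - v))\<^sup>2"
    "lam / 2 * (norm (v - m))\<^sup>2 = lam / 8 * (norm (u - v))\<^sup>2"
    unfolding um vm by (simp_all add: power2_eq_square)
  moreover have "inner (gx_f m y) (u - m) + inner (gx_f m y) (v - m) = 0"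
    unfolding um vm by (simp add: inner_minus_right)
  moreover have "f m y + inner (gx_f m y) (u - m) - lam / 2 * (norm (u - m))\<^sup>2 \<le> f u y"
    using f_quadratic_bound_x[OF m u y] unfolding abs_le_iff by linarith
  moreover have "f m y + inner (gx_f m y) (v - m) - lam / 2 * (norm (v - m))\<^sup>2 \<le> f v y"
    using f_quadratic_bound_x[OF m v y] unfolding abs_le_iff by linarith
  moreover have "f u y \<le> max_fun f Y u" "f v y \<le> max_fun f Y v"
    using f_le_max_fun u v y by auto
  ultimately show "f (midpoint u v) y \<le> (max_fun f Y u + max_fun f Y v) / 2 + lam / 8 * (norm (u - v))\<^sup>2"
    unfolding m_def[symmetric] by argo
qed

lemma Hxy_norm_bound:
  assumes "x \<in> X" "y \<in> Y" "u \<in> Y" "v \<in> Y"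
  shows "norm (Hxy x y (u - v)) \<le> mu * norm (u - v)"
  using gx_f_lipschitz[of x x] assms
  by (intro has_derivative_lipschitz_bound[OF Hxy Y_convex]) auto

lemma gx_f_mixed_difference:
  assumes z: "z \<in> X" "z' \<in> X" and y: "u \<in> Y" "w \<in> Y"
  shows "norm ((gx_f z' u - gx_f z u) - (gx_f z' w - gx_f z w)) \<le> tau * norm (z' - z) * norm (u - w)"
proof -
  have "((\<lambda>y. gx_f z' y - gx_f z y) has_derivative blinfun_apply (Hxy z' y - Hxy z y)) (at y within Y)"
    if "y \<in> Y" for y
    using has_derivative_diff[OF Hxy[OF z(2) that] Hxy[OF z(1) that]] by (simp add: minus_blinfun.rep_eq)
  moreover have "onorm (blinfun_apply (Hxy z' y - Hxy z y)) \<le> tau * norm (z' - z)" if "y \<in> Y" for y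
    using Hxy_lipschitz[OF z that] by (simp add: norm_blinfun.rep_eq)
  ultimately show ?thesis
    by (rule differentiable_bound[OF Y_convex _ _ y])
qed

lemma gx_f_difference_quotient_lipschitz:
  assumes z: "z \<in> X" "z' \<in> X" and y: "yhat \<in> Y" "y' \<in> Y" and t: "0 \<le> t"
  shows "norm ((gx_f z' yhat + t *\<^sub>R (gx_f z' y' - gx_f z' yhat)) - (gx_f z yhat + t *\<^sub>R (gx_f z y' - gx_f z yhat)))
    \<le> (lam + tau * (t * norm (y' - yhat))) * norm (z' - z)"
proof -
  have "(gx_f z' yhat + t *\<^sub>R (gx_f z' y' - gx_f z' yhat)) - (gx_f z yhat + t *\<^sub>R (gx_f z y' - gx_f z yhat))
      = (gx_f z' yhat - gx_f z yhat) + t *\<^sub>R ((gx_f z' y' - gx_f z y') - (gx_f z' yhat - gx_f z yhat))"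
    by (simp add: algebra_simps)
  also have "norm \<dots> \<le> lam * norm (z' - z) + t * (tau * norm (z' - z) * norm (y' - yhat))"
    using gx_f_lipschitz[OF z y(1) y(1)] gx_f_mixed_difference[OF z y(2,1)] t
    by (intro order_trans[OF norm_triangle_ineq] add_mono) (auto intro: mult_left_mono)
  also have "\<dots> = (lam + tau * (t * norm (y' - yhat))) * norm (z' - z)"
    by (simp add: algebra_simps)
  finally show ?thesis .
qed

text \<open>The \<open>x\<close>-gradient of \<open>f (\<cdot>) yhat + \<langle>gy_f (\<cdot>) yhat, y - yhat\<rangle>\<close> is obtained as the limit of the
  difference quotients \<open>f (\<cdot>) yhat + n (f (\<cdot>) (yhat + (y - yhat)/n) - f (\<cdot>) yhat)\<close>, whose gradients are
  Lipschitz uniformly in \<open>n\<close> by (A3); no differentiability of \<open>gy_f\<close> in \<open>x\<close> is needed.\<close>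
lemma linearized_quadratic_bound:
  assumes yhat: "yhat \<in> Y" and y: "y \<in> Y" and x: "x \<in> X" and x': "x' \<in> X"
  shows "\<bar>(f x' yhat + inner (gy_f x' yhat) (y - yhat)) - (f x yhat + inner (gy_f x yhat) (y - yhat))
      - inner (gx_f x yhat + Hxy x yhat (y - yhat)) (x' - x)\<bar>
    \<le> (lam + tau * norm (y - yhat)) / 2 * (norm (x' - x))\<^sup>2"
proof -
  define v where "v = y - yhat"
  define K where "K = lam + tau * norm v"
  define yn where "yn n = yhat + inverse (real (Suc n)) *\<^sub>R v" for n
  have yn: "yn n \<in> Y" for n
    using convexD_alt[OF Y_convex yhat y, of "inverse (real (Suc n))"]
    by (simp add: yn_def v_def algebra_simps inverse_le_1_iff)
  define F where "F n z = f z yhat + real (Suc n) * (f z (yn n) - f z yhat)" for n z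
  define A where "A n z = gx_f z yhat + real (Suc n) *\<^sub>R (gx_f z (yn n) - gx_f z yhat)" for n z
  have dF: "(F n has_derivative (\<lambda>h. inner (A n z) h)) (at z within X)" if "z \<in> X" for n z
  proof -
    have "(F n has_derivative (\<lambda>h. inner (gx_f z yhat) h
        + real (Suc n) * (inner (gx_f z (yn n)) h - inner (gx_f z yhat) h))) (at z within X)"
      unfolding F_def[abs_def]
      by (intro has_derivative_add has_derivative_mult_right has_derivative_diff gx_f that yhat yn)
    then show ?thesis
      by (simp add: A_def inner_add_left inner_diff_left algebra_simps)
  qed
  have "real (Suc n) * norm (yn n - yhat) = norm v" for n
    by (simp add: yn_def field_simps)
  then have lipA: "norm (A n z' - A n z) \<le> K * norm (z' - z)" if "z \<in> X" "z' \<in> X" for n z z'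
    using gx_f_difference_quotient_lipschitz[OF that yhat yn, of "real (Suc n)" n]
    by (simp add: A_def K_def)
  have bound: "\<bar>F n x' - F n x - inner (A n x) (x' - x)\<bar> \<le> K / 2 * (norm (x' - x))\<^sup>2" for n
    by (rule lipschitz_gradient_quadratic_bound[OF X_convex dF lipA x x'])
  have limF: "(\<lambda>n. F n z) \<longlonglongrightarrow> f z yhat + inner (gy_f z yhat) v" if "z \<in> X" for z
    unfolding F_def yn_def
    using difference_quotient_tendsto[OF gy_f[OF that yhat] Y_convex yhat, of v] y
    by (intro tendsto_intros) (simp_all add: v_def)
  have limA: "(\<lambda>n. A n x) \<longlonglongrightarrow> gx_f x yhat + Hxy x yhat v"
    unfolding A_def yn_def
    using difference_quotient_tendsto[OF Hxy[OF x yhat] Y_convex yhat, of v] y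
    by (intro tendsto_intros) (simp_all add: v_def)
  have "(\<lambda>n. \<bar>F n x' - F n x - inner (A n x) (x' - x)\<bar>)
    \<longlonglongrightarrow> \<bar>(f x' yhat + inner (gy_f x' yhat) v) - (f x yhat + inner (gy_f x yhat) v)
      - inner (gx_f x yhat + Hxy x yhat v) (x' - x)\<bar>"
    by (intro tendsto_intros limF x x' limA)
  then show ?thesis
    unfolding v_def[symmetric] K_def[symmetric] using bound by (intro LIMSEQ_le_const2) auto
qed

lemma max_fun_model_uncoupled:
  assumes x: "x \<in> X" and y': "y' \<in> Y" and z: "z \<in> X"
  shows "max_fun f Y z \<le> max_fun f Y x + inner (gx_f x y') (z - x) + lam / 2 * (norm (z - x))\<^sup>2
      + mu * D * norm (z - x)"
    and "max_fun f Y x + inner (gx_f x y') (z - x) - lam / 2 * (norm (z - x))\<^sup>2 - mu * D * norm (z - x)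
      \<le> max_fun f Y z"
proof -
  have cross: "\<bar>inner (gx_f x y - gx_f x y') (z - x)\<bar> \<le> mu * D * norm (z - x)" if y: "y \<in> Y" for y
  proof -
    have "norm (gx_f x y - gx_f x y') \<le> mu * D"
      using gx_f_lipschitz[OF x x y' y] norm_diff_le_D[OF y y'] mu_nonneg
      by (simp add: mult_left_mono order_trans)
    then show ?thesis
      using Cauchy_Schwarz_ineq2[of "gx_f x y - gx_f x y'" "z - x"]
      by (meson mult_right_mono norm_ge_zero order_trans)
  qed
  show "max_fun f Y z \<le> max_fun f Y x + inner (gx_f x y') (z - x) + lam / 2 * (norm (z - x))\<^sup>2
      + mu * D * norm (z - x)"
  proof (rule max_fun_le)
    fix y assume y: "y \<in> Y"
    show "f z y \<le> max_fun f Y x + inner (gx_f x y') (z - x) + lam / 2 * (norm (z - x))\<^sup>2 + mu * D * norm (z - x)"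
      using f_quadratic_bound_x[OF x z y] f_le_max_fun[OF x y] cross[OF y]
      unfolding abs_le_iff inner_diff_left by linarith
  qed
  have "max_fun f Y x \<le> max_fun f Y z - inner (gx_f x y') (z - x) + lam / 2 * (norm (z - x))\<^sup>2
      + mu * D * norm (z - x)"
  proof (rule max_fun_le)
    fix y assume y: "y \<in> Y"
    show "f x y \<le> max_fun f Y z - inner (gx_f x y') (z - x) + lam / 2 * (norm (z - x))\<^sup>2 + mu * D * norm (z - x)"
      using f_quadratic_bound_x[OF x z y] f_le_max_fun[OF z y] cross[OF y]
      unfolding abs_le_iff inner_diff_left by linarith
  qed
  then show "max_fun f Y x + inner (gx_f x y') (z - x) - lam / 2 * (norm (z - x))\<^sup>2 - mu * D * norm (z - x)
      \<le> max_fun f Y z"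
    by linarith
qed

text \<open>The coupled variant of Algorithm 2 is a projected gradient method for \<open>coupled_surrogate yhat\<close>.\<close>
definition linearized_model :: "'b \<Rightarrow> 'b \<Rightarrow> 'a \<Rightarrow> real"
  where "linearized_model yhat y z = f z yhat + inner (gy_f z yhat) (y - yhat) - rho / 2 * (norm (y - yhat))\<^sup>2"

definition coupled_surrogate :: "'b \<Rightarrow> 'a \<Rightarrow> real"
  where "coupled_surrogate yhat z = (SUP y\<in>Y. linearized_model yhat y z)"

lemma linearized_model_le_f:
  assumes "z \<in> X" "yhat \<in> Y" "y \<in> Y"
  shows "linearized_model yhat y z \<le> f z y"
  using f_quadratic_bound_y[OF assms] unfolding linearized_model_def abs_le_iff by linarith

lemma f_le_linearized_model:
  assumes "z \<in> X" "yhat \<in> Y" "y \<in> Y"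
  shows "f z y \<le> linearized_model yhat y z + rho * D\<^sup>2"
proof -
  have "rho * (norm (y - yhat))\<^sup>2 \<le> rho * D\<^sup>2"
    using norm_diff_le_D[OF assms(3,2)] rho_pos by (intro mult_left_mono power_mono) auto
  then show ?thesis
    using f_quadratic_bound_y[OF assms] unfolding linearized_model_def abs_le_iff by linarith
qed

lemma linearized_model_le_coupled_surrogate:
  assumes "z \<in> X" "yhat \<in> Y" "y \<in> Y"
  shows "linearized_model yhat y z \<le> coupled_surrogate yhat z"
proof -
  have "linearized_model yhat y z \<le> max_fun f Y z" if "y \<in> Y" for y
    using linearized_model_le_f[OF assms(1,2) that] f_le_max_fun[OF assms(1) that] by linarith
  then have "bdd_above ((\<lambda>y. linearized_model yhat y z) ` Y)"
    by (rule bdd_aboveI2)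
  then show ?thesis
    unfolding coupled_surrogate_def by (rule cSUP_upper[OF assms(3)])
qed

lemma coupled_surrogate_le:
  "(\<And>y. y \<in> Y \<Longrightarrow> linearized_model yhat y z \<le> B) \<Longrightarrow> coupled_surrogate yhat z \<le> B"
  unfolding coupled_surrogate_def by (rule cSUP_least[OF Y_nonempty])

lemma coupled_surrogate_le_max_fun:
  assumes "z \<in> X" "yhat \<in> Y"
  shows "coupled_surrogate yhat z \<le> max_fun f Y z"
proof (rule coupled_surrogate_le)
  fix y assume "y \<in> Y"
  then show "linearized_model yhat y z \<le> max_fun f Y z"
    using linearized_model_le_f[OF assms] f_le_max_fun[OF assms(1)] by (meson order_trans)
qed

lemma max_fun_le_coupled_surrogate:
  assumes "z \<in> X" "yhat \<in> Y"
  shows "max_fun f Y z \<le> coupled_surrogate yhat z + rho * D\<^sup>2"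
proof (rule max_fun_le)
  fix y assume "y \<in> Y"
  then show "f z y \<le> coupled_surrogate yhat z + rho * D\<^sup>2"
    using f_le_linearized_model[OF assms] linearized_model_le_coupled_surrogate[OF assms]
    by (meson add_right_mono order_trans)
qed

lemma linearized_model_proj_max:
  assumes x: "x \<in> X" and yt: "is_proj Y (yhat + (1 / rho) *\<^sub>R gy_f x yhat) yt" and y: "y \<in> Y"
  shows "linearized_model yhat y x + rho / 2 * (norm (y - yt))\<^sup>2 \<le> linearized_model yhat yt x"
proof -
  define c where "c = yhat + (1 / rho) *\<^sub>R gy_f x yhat"
  have obtuse: "inner (c - yt) (y - yt) \<le> 0"
    unfolding c_def by (rule is_proj_obtuse_angle[OF Y_convex yt y])
  have gc: "gy_f x yhat = rho *\<^sub>R (c - yhat)" using rho_pos by (simp add: c_def)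
  have "linearized_model yhat y x - linearized_model yhat yt x
      = rho * inner (c - yt) (y - yt) - rho / 2 * (norm (y - yt))\<^sup>2"
    unfolding linearized_model_def gc power2_norm_eq_inner
    by (simp add: inner_diff_left inner_diff_right inner_commute algebra_simps)
  also have "\<dots> \<le> - (rho / 2 * (norm (y - yt))\<^sup>2)"
    using obtuse rho_pos by (simp add: mult_nonneg_nonpos)
  finally show ?thesis by simp
qed

lemma coupled_surrogate_proj:
  assumes x: "x \<in> X" and yhat: "yhat \<in> Y" and yt: "is_proj Y (yhat + (1 / rho) *\<^sub>R gy_f x yhat) yt"
  shows "coupled_surrogate yhat x = linearized_model yhat yt x"
proof (rule antisym)
  show "coupled_surrogate yhat x \<le> linearized_model yhat yt x"
  proof (rule coupled_surrogate_le)
    fix y assume "y \<in> Y"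
    moreover have "0 \<le> rho / 2 * (norm (y - yt))\<^sup>2" using rho_pos by simp
    ultimately show "linearized_model yhat y x \<le> linearized_model yhat yt x"
      using linearized_model_proj_max[OF x yt] by fastforce
  qed
  show "linearized_model yhat yt x \<le> coupled_surrogate yhat x"
    using yt unfolding is_proj_def by (intro linearized_model_le_coupled_surrogate x yhat) simp
qed

lemma linearized_model_quadratic_bound:
  assumes yhat: "yhat \<in> Y" and y: "y \<in> Y" and x: "x \<in> X" and z: "z \<in> X"
  shows "\<bar>linearized_model yhat y z - linearized_model yhat y x
      - inner (gx_f x yhat + Hxy x yhat (y - yhat)) (z - x)\<bar> \<le> (lam + tau * D) / 2 * (norm (z - x))\<^sup>2"
proof -
  have "linearized_model yhat y z - linearized_model yhat y x
      = (f z yhat + inner (gy_f z yhat) (y - yhat)) - (f x yhat + inner (gy_f x yhat) (y - yhat))"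
    unfolding linearized_model_def by simp
  moreover have "(lam + tau * norm (y - yhat)) / 2 * (norm (z - x))\<^sup>2 \<le> (lam + tau * D) / 2 * (norm (z - x))\<^sup>2"
    using norm_diff_le_D[OF y yhat] tau_nonneg
    by (intro mult_right_mono divide_right_mono add_left_mono mult_left_mono) auto
  ultimately show ?thesis
    using linearized_quadratic_bound[OF yhat y x z] by linarith
qed

lemma coupled_surrogate_model:
  assumes x: "x \<in> X" and yhat: "yhat \<in> Y" and yt: "is_proj Y (yhat + (1 / rho) *\<^sub>R gy_f x yhat) yt"
    and z: "z \<in> X"
  defines "G \<equiv> gx_f x yhat + Hxy x yhat (yt - yhat)"
  shows "coupled_surrogate yhat z
      \<le> coupled_surrogate yhat x + inner G (z - x) + (lam + tau * D + mu\<^sup>2 / rho) / 2 * (norm (z - x))\<^sup>2"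
    and "coupled_surrogate yhat x + inner G (z - x) - (lam + tau * D) / 2 * (norm (z - x))\<^sup>2
      \<le> coupled_surrogate yhat z"
proof -
  have ytY: "yt \<in> Y" using yt unfolding is_proj_def by simp
  note surrogate_x = coupled_surrogate_proj[OF x yhat yt]
  show "coupled_surrogate yhat z
      \<le> coupled_surrogate yhat x + inner G (z - x) + (lam + tau * D + mu\<^sup>2 / rho) / 2 * (norm (z - x))\<^sup>2"
  proof (rule coupled_surrogate_le)
    fix y assume y: "y \<in> Y"
    define r where "r = norm (y - yt)"
    define d where "d = norm (z - x)"
    have "inner (Hxy x yhat (y - yt)) (z - x) \<le> mu * r * d"
      using Hxy_norm_bound[OF x yhat y ytY] norm_cauchy_schwarz[of "Hxy x yhat (y - yt)" "z - x"]
      unfolding r_def d_def by (meson mult_right_mono norm_ge_zero order_trans)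
    moreover have "mu * r * d - rho / 2 * r\<^sup>2 \<le> mu\<^sup>2 / rho / 2 * d\<^sup>2"
    proof -
      have "0 \<le> (rho * r - mu * d)\<^sup>2" by simp
      then show ?thesis using rho_pos by (simp add: field_simps power2_eq_square)
    qed
    moreover have "inner (gx_f x yhat + Hxy x yhat (y - yhat)) (z - x)
        = inner G (z - x) + inner (Hxy x yhat (y - yt)) (z - x)"
      unfolding G_def by (simp add: inner_add_left inner_diff_left blinfun.diff_right)
    moreover have "(lam + tau * D + mu\<^sup>2 / rho) / 2 * d\<^sup>2 = (lam + tau * D) / 2 * d\<^sup>2 + mu\<^sup>2 / rho / 2 * d\<^sup>2"
      by (simp add: algebra_simps)
    ultimately show "linearized_model yhat y z
        \<le> coupled_surrogate yhat x + inner G (z - x) + (lam + tau * D + mu\<^sup>2 / rho) / 2 * (norm (z - x))\<^sup>2"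
      using linearized_model_quadratic_bound[OF yhat y x z] linearized_model_proj_max[OF x yt y] surrogate_x
      unfolding r_def[symmetric] d_def[symmetric] abs_le_iff by linarith
  qed
  show "coupled_surrogate yhat x + inner G (z - x) - (lam + tau * D) / 2 * (norm (z - x))\<^sup>2
      \<le> coupled_surrogate yhat z"
    using linearized_model_quadratic_bound[OF yhat ytY x z] linearized_model_le_coupled_surrogate[OF z yhat ytY]
      surrogate_x
    unfolding G_def abs_le_iff by linarith
qed

lemma uncoupled_step:
  assumes x: "x \<in> X" and y': "y' \<in> Y" and gam: "0 < gam" and L: "lam \<le> L" "lam * gam \<le> 1"
    and bdd: "bdd_below (max_fun f Y ` X)" and pr: "is_proj X (x - gam *\<^sub>R gx_f x y') x'"
  defines "s \<equiv> proj_step_residual gam x (gx_f x y') x'"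
  shows "max_fun f Y x' \<le> max_fun f Y x - gam * s\<^sup>2 / 2 + mu * D * gam * s"
    and "\<exists>g. (moreau_env (max_fun f Y) X (2 * L) has_derivative (\<lambda>h. inner g h)) (at x) \<and>
      (norm g)\<^sup>2 \<le> 4 * (s + mu * D) * norm g + 4 * L * gam * s\<^sup>2"
proof -
  have x': "x' \<in> X" using pr unfolding is_proj_def by simp
  have muD: "0 \<le> mu * D" using mu_nonneg D_nonneg by simp
  show "max_fun f Y x' \<le> max_fun f Y x - gam * s\<^sup>2 / 2 + mu * D * gam * s"
    unfolding s_def using max_fun_model_uncoupled(1)[OF x y' x'] muD
    by (intro projected_step_descent[OF X_convex x gam pr L(2)]) (simp_all add: mult.assoc)
  have lower: "max_fun f Y x + inner (gx_f x y') (z - x) - L / 2 * (norm (z - x))\<^sup>2 - mu * D * norm (z - x)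
      \<le> max_fun f Y z" if "z \<in> X" for z
  proof -
    have "lam / 2 * (norm (z - x))\<^sup>2 \<le> L / 2 * (norm (z - x))\<^sup>2"
      using L by (intro mult_right_mono) auto
    then show ?thesis using max_fun_model_uncoupled(2)[OF x y' that] by linarith
  qed
  have "lam < 2 * L" "0 < L" using L lam_pos by linarith+
  from projected_step_envelope_gradient[OF X_convex X_nonempty bdd max_fun_midpoint_weakly_convex this
      x gam pr _ _ lower, of "0"]
  show "\<exists>g. (moreau_env (max_fun f Y) X (2 * L) has_derivative (\<lambda>h. inner g h)) (at x) \<and>
      (norm g)\<^sup>2 \<le> 4 * (s + mu * D) * norm g + 4 * L * gam * s\<^sup>2"
    unfolding s_def by simp
qed

lemma coupled_step:
  assumes x: "x \<in> X" and yhat: "yhat \<in> Y" and yt: "is_proj Y (yhat + (1 / rho) *\<^sub>R gy_f x yhat) yt"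
    and gam: "0 < gam" and L: "lam + tau * D \<le> L" and gM: "(lam + tau * D + mu\<^sup>2 / rho) * gam \<le> 1"
    and bdd: "bdd_below (max_fun f Y ` X)"
    and pr: "is_proj X (x - gam *\<^sub>R (gx_f x yhat + Hxy x yhat (yt - yhat))) x'"
  defines "s \<equiv> proj_step_residual gam x (gx_f x yhat + Hxy x yhat (yt - yhat)) x'"
  shows "coupled_surrogate yhat x' \<le> coupled_surrogate yhat x - gam * s\<^sup>2 / 2"
    and "\<exists>g. (moreau_env (max_fun f Y) X (2 * L) has_derivative (\<lambda>h. inner g h)) (at x) \<and>
      (norm g)\<^sup>2 \<le> 4 * s * norm g + 8 * L * (rho * D\<^sup>2) + 4 * L * gam * s\<^sup>2"
proof -
  have x': "x' \<in> X" using pr unfolding is_proj_def by simp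
  show "coupled_surrogate yhat x' \<le> coupled_surrogate yhat x - gam * s\<^sup>2 / 2"
    using projected_step_descent[OF X_convex x gam pr gM order_refl, of "coupled_surrogate yhat"]
      coupled_surrogate_model(1)[OF x yhat yt x']
    unfolding s_def by simp
  have lower: "coupled_surrogate yhat x + inner (gx_f x yhat + Hxy x yhat (yt - yhat)) (z - x)
      - L / 2 * (norm (z - x))\<^sup>2 - 0 * norm (z - x) \<le> coupled_surrogate yhat z" if "z \<in> X" for z
  proof -
    have "(lam + tau * D) / 2 * (norm (z - x))\<^sup>2 \<le> L / 2 * (norm (z - x))\<^sup>2"
      using L by (intro mult_right_mono) auto
    then show ?thesis using coupled_surrogate_model(2)[OF x yhat yt that] by simp
  qed
  have "0 \<le> tau * D" using tau_nonneg D_nonneg by simp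
  then have "lam < 2 * L" "0 < L" using L lam_pos by linarith+
  from projected_step_envelope_gradient[OF X_convex X_nonempty bdd max_fun_midpoint_weakly_convex this
      x gam pr coupled_surrogate_le_max_fun[OF _ yhat] max_fun_le_coupled_surrogate[OF x yhat] lower]
  show "\<exists>g. (moreau_env (max_fun f Y) X (2 * L) has_derivative (\<lambda>h. inner g h)) (at x) \<and>
      (norm g)\<^sup>2 \<le> 4 * s * norm g + 8 * L * (rho * D\<^sup>2) + 4 * L * gam * s\<^sup>2"
    unfolding s_def by simp
qed

lemma alg2_stationary_uncoupled:
  assumes gam: "0 < gam" and L: "lam \<le> L" and gL: "gam * L \<le> 1 / 3"
    and eps: "0 < eps" and small: "200 * (mu * D) \<le> eps"
    and budget: "700 * (max_fun f Y x0 - (INF x\<in>X. max_fun f Y x)) / eps\<^sup>2 + 1 / L \<le> real T * gam"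
    and x0: "x0 \<in> X" and bdd: "bdd_below (max_fun f Y ` X)"
    and run: "alg2_run X Y gx_f gy_f Hxy x0 yhat gam T False gam_y xs ys xt"
  shows "alg2_output gam T xs xt \<in> X \<and>
    (\<exists>g. (moreau_env (max_fun f Y) X (2 * L) has_derivative (\<lambda>h. inner g h)) (at (alg2_output gam T xs xt))
      \<and> norm g \<le> eps)"
proof -
  have in_X: "\<And>t. t \<le> T \<Longrightarrow> xs t \<in> X" by (rule alg2_run_in_X[OF run x0])
  have L0: "0 < L" using L lam_pos by linarith
  have "lam * gam \<le> L * gam" using L gam by (intro mult_right_mono) auto
  then have lam_gam: "lam * gam \<le> 1" using gL unfolding mult.commute[of gam L] by linarith
  have step: "max_fun f Y (xs (Suc t)) \<le> max_fun f Y (xs t) - gam * (alg2_eps gam xs xt t)\<^sup>2 / 2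
      + mu * D * gam * alg2_eps gam xs xt t \<and>
    (\<exists>g. (moreau_env (max_fun f Y) X (2 * L) has_derivative (\<lambda>h. inner g h)) (at (xs t)) \<and>
      (norm g)\<^sup>2 \<le> 4 * (alg2_eps gam xs xt t + mu * D) * norm g + 4 * L * gam * (alg2_eps gam xs xt t)\<^sup>2)"
    if t: "t < T" for t
  proof -
    have y: "ys t \<in> Y" and xt: "xt (Suc t) = xs t - gam *\<^sub>R gx_f (xs t) (ys t)"
      using alg2_runD(4)[OF run t] by auto
    have pr: "is_proj X (xs t - gam *\<^sub>R gx_f (xs t) (ys t)) (xs (Suc t))"
      using alg2_runD(2)[OF run t] xt by simp
    show ?thesis
      using uncoupled_step[OF in_X y gam L lam_gam bdd pr] t alg2_eps_eq_proj_step_residual[where xs=xs and xt=xt, OF xt] by simp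
  qed
  have total: "max_fun f Y (xs 0) - max_fun f Y (xs T) \<le> (max_fun f Y x0 - (INF x\<in>X. max_fun f Y x)) + 0"
    using alg2_runD(1)[OF run] cINF_lower[OF bdd in_X[OF order_refl]] by simp
  show ?thesis
  proof (rule alg2_output_stationary[where Psi="max_fun f Y" and a="mu * D" and b=0,
        OF gam L0 gL _ order_refl eps _ budget _ total])
    show "0 \<le> mu * D" using mu_nonneg D_nonneg by simp
    show "mu * D \<le> eps / 200 \<and> 0 = 0 \<or> mu * D = 0 \<and> 40000 * L * 0 \<le> eps\<^sup>2"
      using small by simp
    show "0 \<le> max_fun f Y x0 - (INF x\<in>X. max_fun f Y x)"
      using cINF_lower[OF bdd x0] by simp
  qed (use in_X alg2_runD(2)[OF run] step in \<open>auto simp: mult.assoc\<close>)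
qed

lemma alg2_stationary_coupled:
  assumes gam: "0 < gam" and L: "lam + tau * D \<le> L" and gL: "gam * L \<le> 1 / 3"
    and gM: "(lam + tau * D + mu\<^sup>2 / rho) * gam \<le> 1"
    and eps: "0 < eps" and small: "40000 * L * (rho * D\<^sup>2) \<le> eps\<^sup>2"
    and budget: "700 * (max_fun f Y x0 - (INF x\<in>X. max_fun f Y x)) / eps\<^sup>2 + 1 / L \<le> real T * gam"
    and x0: "x0 \<in> X" and yhat: "yhat \<in> Y" and bdd: "bdd_below (max_fun f Y ` X)"
    and run: "alg2_run X Y gx_f gy_f Hxy x0 yhat gam T True (1 / rho) xs ys xt"
  shows "alg2_output gam T xs xt \<in> X \<and>
    (\<exists>g. (moreau_env (max_fun f Y) X (2 * L) has_derivative (\<lambda>h. inner g h)) (at (alg2_output gam T xs xt))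
      \<and> norm g \<le> eps)"
proof -
  have in_X: "\<And>t. t \<le> T \<Longrightarrow> xs t \<in> X" by (rule alg2_run_in_X[OF run x0])
  have "0 \<le> tau * D" using tau_nonneg D_nonneg by simp
  then have L0: "0 < L" using L lam_pos by linarith
  have step: "coupled_surrogate yhat (xs (Suc t)) \<le> coupled_surrogate yhat (xs t)
      - gam * (alg2_eps gam xs xt t)\<^sup>2 / 2 \<and>
    (\<exists>g. (moreau_env (max_fun f Y) X (2 * L) has_derivative (\<lambda>h. inner g h)) (at (xs t)) \<and>
      (norm g)\<^sup>2 \<le> 4 * alg2_eps gam xs xt t * norm g + 8 * L * (rho * D\<^sup>2)
        + 4 * L * gam * (alg2_eps gam xs xt t)\<^sup>2)" if t: "t < T" for t
  proof -
    have y: "is_proj Y (yhat + (1 / rho) *\<^sub>R gy_f (xs t) yhat) (ys t)"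
      and xt: "xt (Suc t) = xs t - gam *\<^sub>R (gx_f (xs t) yhat + Hxy (xs t) yhat (ys t - yhat))"
      using alg2_runD(3)[OF run t] by auto
    have pr: "is_proj X (xs t - gam *\<^sub>R (gx_f (xs t) yhat + Hxy (xs t) yhat (ys t - yhat))) (xs (Suc t))"
      using alg2_runD(2)[OF run t] xt by simp
    show ?thesis
      using coupled_step[OF in_X yhat y gam L gM bdd pr] t alg2_eps_eq_proj_step_residual[where xs=xs and xt=xt, OF xt] by simp
  qed
  have total: "coupled_surrogate yhat (xs 0) - coupled_surrogate yhat (xs T)
      \<le> (max_fun f Y x0 - (INF x\<in>X. max_fun f Y x)) + rho * D\<^sup>2"
    using alg2_runD(1)[OF run] cINF_lower[OF bdd in_X[OF order_refl]]
      coupled_surrogate_le_max_fun[OF x0 yhat] max_fun_le_coupled_surrogate[OF in_X[OF order_refl] yhat]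
    by simp
  show ?thesis
  proof (rule alg2_output_stationary[where Psi="coupled_surrogate yhat" and a=0 and b="rho * D\<^sup>2",
        OF gam L0 gL order_refl _ eps _ budget _ total])
    show "0 \<le> rho * D\<^sup>2" using rho_pos by simp
    show "0 \<le> eps / 200 \<and> rho * D\<^sup>2 = 0 \<or> 0 = 0 \<and> 40000 * L * (rho * D\<^sup>2) \<le> eps\<^sup>2"
      using small by simp
    show "0 \<le> max_fun f Y x0 - (INF x\<in>X. max_fun f Y x)"
      using cINF_lower[OF bdd x0] by simp
  qed (use in_X alg2_runD(2)[OF run] step in auto)
qed

lemma alg2_stationary:
  defines "L \<equiv> lam + 2 * tau * D"
  defines "gam \<equiv> 1 / (3 * L + mu\<^sup>2 / rho)"
  assumes eps: "0 < eps" and small: "200 * min mu (sqrt (L * rho)) * D \<le> eps"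
    and x0: "x0 \<in> X" and yhat: "yhat \<in> Y" and bdd: "bdd_below (max_fun f Y ` X)"
    and T: "(3 + mu\<^sup>2 / (L * rho)) * (700 * L * (max_fun f Y x0 - (INF x\<in>X. max_fun f Y x)) / eps\<^sup>2 + 1)
      \<le> real T"
    and run: "alg2_run X Y gx_f gy_f Hxy x0 yhat gam T (sqrt (L * rho) \<le> mu) (1 / rho) xs ys xt"
  shows "alg2_output gam T xs xt \<in> X \<and>
    (\<exists>g. (moreau_env (max_fun f Y) X (2 * L) has_derivative (\<lambda>h. inner g h)) (at (alg2_output gam T xs xt))
      \<and> norm g \<le> eps)"
proof -
  have tauD: "0 \<le> tau * D" using tau_nonneg D_nonneg by simp
  have L_ge: "lam + tau * D \<le> L" using tauD unfolding L_def by linarith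
  have L0: "0 < L" using lam_pos tauD by (simp add: L_def)
  have gam: "0 < gam" using L0 rho_pos by (simp add: gam_def add_pos_nonneg)
  have "3 * L \<le> 3 * L + mu\<^sup>2 / rho" using rho_pos by simp
  then have gL: "gam * L \<le> 1 / 3" using L0 by (simp add: gam_def field_simps)
  have budget: "700 * (max_fun f Y x0 - (INF x\<in>X. max_fun f Y x)) / eps\<^sup>2 + 1 / L \<le> real T * gam"
    unfolding gam_def by (rule iteration_budget[OF L0 rho_pos T])
  show ?thesis
  proof (cases "sqrt (L * rho) \<le> mu")
    case True
    have "(lam + tau * D + mu\<^sup>2 / rho) * gam \<le> (3 * L + mu\<^sup>2 / rho) * gam"
      using gam tauD lam_pos by (intro mult_right_mono) (auto simp: L_def algebra_simps)
    also have "\<dots> = 1" using gam by (simp add: gam_def)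
    finally have gM: "(lam + tau * D + mu\<^sup>2 / rho) * gam \<le> 1" .
    have "200 * sqrt (L * rho) * D \<le> eps" using small True by (simp add: min_absorb2)
    then have "(200 * sqrt (L * rho) * D)\<^sup>2 \<le> eps\<^sup>2"
      using L0 rho_pos D_nonneg by (intro power_mono) auto
    then have "40000 * L * (rho * D\<^sup>2) \<le> eps\<^sup>2"
      using L0 rho_pos by (simp add: power_mult_distrib)
    with True run show ?thesis
      by (intro alg2_stationary_coupled[OF gam L_ge gL gM eps _ budget x0 yhat bdd]) auto
  next
    case False
    with small have "200 * (mu * D) \<le> eps" by (simp add: min_def)
    moreover have "lam \<le> L" using L_ge tauD by linarith
    ultimately show ?thesis
      using False run by (intro alg2_stationary_uncoupled[OF gam _ gL eps _ budget x0 bdd]) auto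
  qed
qed

end

theorem theorem3:
  fixes X :: "'a::euclidean_space set" and Y :: "'b::euclidean_space set"
    and f :: "'a \<Rightarrow> 'b \<Rightarrow> real"
    and gx_f :: "'a \<Rightarrow> 'b \<Rightarrow> 'a" and gy_f :: "'a \<Rightarrow> 'b \<Rightarrow> 'b"
    and Hxy :: "'a \<Rightarrow> 'b \<Rightarrow> ('b \<Rightarrow>\<^sub>L 'a)"
    and lam mu rho1 sigma1 tau1 D eps :: real
    and x0 :: 'a and yhat :: 'b and T :: nat
    and xs :: "nat \<Rightarrow> 'a" and ys :: "nat \<Rightarrow> 'b" and xt :: "nat \<Rightarrow> 'a"
  assumes X: "convex X" "interior X \<noteq> {}"
    and Y: "convex Y" "interior Y \<noteq> {}" "compact Y"
    and D: "diameter Y \<le> D"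
    (* (A1) *)
    and gx: "\<And>x y. x \<in> X \<Longrightarrow> y \<in> Y \<Longrightarrow>
               ((\<lambda>x'. f x' y) has_derivative (\<lambda>h. inner (gx_f x y) h)) (at x within X)"
    and A1: "lam > 0" "mu \<ge> 0"
       "\<And>x x' y y'. x \<in> X \<Longrightarrow> x' \<in> X \<Longrightarrow> y \<in> Y \<Longrightarrow> y' \<in> Y \<Longrightarrow>
          norm (gx_f x' y' - gx_f x y) \<le> lam * norm (x' - x) + mu * norm (y' - y)"
    (* (A2), k = 1 *)
    and gy: "\<And>x y. x \<in> X \<Longrightarrow> y \<in> Y \<Longrightarrow>
               ((\<lambda>y'. f x y') has_derivative (\<lambda>h. inner (gy_f x y) h)) (at y within Y)"
    and A2: "rho1 > 0" "sigma1 \<ge> 0"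
       "\<And>x x' y y'. x \<in> X \<Longrightarrow> x' \<in> X \<Longrightarrow> y \<in> Y \<Longrightarrow> y' \<in> Y \<Longrightarrow>
          norm (gy_f x' y' - gy_f x y) \<le> rho1 * norm (y' - y) + sigma1 * norm (x' - x)"
    (* (A3), k = 1 *)
    and Hxy: "\<And>x y. x \<in> X \<Longrightarrow> y \<in> Y \<Longrightarrow>
               ((\<lambda>y'. gx_f x y') has_derivative blinfun_apply (Hxy x y)) (at y within Y)"
    and A3: "tau1 \<ge> 0"
       "\<And>x x' y. x \<in> X \<Longrightarrow> x' \<in> X \<Longrightarrow> y \<in> Y \<Longrightarrow>
          norm (Hxy x' y - Hxy x y) \<le> tau1 * norm (x' - x)"
    (* (A4), k = 1 *)
    and A4: "{(x, y). x \<in> X \<and> y \<in> Y \<and> \<not> ((\<lambda>x'. Hxy x' y) differentiable (at x within X))}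
               \<in> sets lebesgue"
    and eps_pos: "eps > 0"
    and small: "200 * min mu (sqrt ((lam + 2 * tau1 * D) * rho1)) * D \<le> eps"
    and x0: "x0 \<in> X" and yhat: "yhat \<in> Y"
    and bdd: "bdd_below (max_fun f Y ` X)"
    and T: "real T \<ge> (3 + mu\<^sup>2 / ((lam + 2 * tau1 * D) * rho1)) *
              (700 * (lam + 2 * tau1 * D) * (max_fun f Y x0 - (INF x\<in>X. max_fun f Y x)) / eps\<^sup>2 + 1)"
    and run: "alg2_run X Y gx_f gy_f Hxy x0 yhat
               (1 / (3 * (lam + 2 * tau1 * D) + mu\<^sup>2 / rho1)) T
               (mu \<ge> sqrt ((lam + 2 * tau1 * D) * rho1)) (1 / rho1) xs ys xt"
  shows "alg2_output (1 / (3 * (lam + 2 * tau1 * D) + mu\<^sup>2 / rho1)) T xs xt \<in> X \<and>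
         (\<exists>g. (moreau_env (max_fun f Y) X (2 * (lam + 2 * tau1 * D)) has_derivative (\<lambda>h. inner g h))
                (at (alg2_output (1 / (3 * (lam + 2 * tau1 * D) + mu\<^sup>2 / rho1)) T xs xt))
              \<and> norm g \<le> eps)"
proof -
  interpret smooth_max_problem X Y f gx_f gy_f Hxy lam mu rho1 tau1 D
  proof
    show "X \<noteq> {}" "Y \<noteq> {}" using X(2) Y(2) interior_subset by blast+
    show "norm (gy_f x y' - gy_f x y) \<le> rho1 * norm (y' - y)" if "x \<in> X" "y \<in> Y" "y' \<in> Y" for x y y'
      using A2(3)[OF that(1) that] by simp
  qed (use X Y D gx A1 gy A2 Hxy A3 in auto)
  show ?thesis
    by (rule alg2_stationary[OF eps_pos small x0 yhat bdd T run])
qed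

end
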